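(* Let $(p_{ij})_{i,j\in\{0,1\}}$ be a transition matrix with all $p_{ij}\in(0,1)$ and $p_{ij}\ne\tfrac12$ for some $(i,j)$; for $i\in\{0,1\}$ let $I_n^i\sim B(n,p_{i0})$. Let $(X_n^i,Z_n^i)_{n\in\mathbb N_0}$, $i\in\{0,1\}$, be random variables with finite second moments such that $X_n^i=Z_n^i=0$ for $n\le1$ and, for all $n\ge2$ and $i\in\{0,1\}$, $$\begin{pmatrix}X_n^i\\ Z_n^i\end{pmatrix}\stackrel{d}{=}\begin{pmatrix}X^0_{I_n^i}\\ Z^0_{I_n^i}\end{pmatrix}+\begin{pmatrix}X^1_{n-I_n^i}\\ Z^1_{n-I_n^i}\end{pmatrix}+\begin{pmatrix}\eta_n^{i,1}\\ \eta_n^{i,2}\end{pmatrix},$$ with $(X^0_k,Z^0_k)_{k\le n}$, $(X^1_k,Z^1_k)_{k\le n}$, $I_n^i$ independent on the right, and $$\eta_n^{i,1}=\frac1H\Big(n\log n-\mathbb E\big[I_n^i\log I_n^i+(n-I_n^i)\log(n-I_n^i)\big]\Big)+\pi_{1-i}\frac{H_{1-i}-H_i}{H}n+\frac{H_1-H_0}{(p_{01}+p_{10})H}p_{i0}p_{i1}^{n-1}n,\quad \eta_n^{i,2}=n-\eta_n^{i,1}.$$ Then for both $i\in\{0,1\}$, as $n\to\infty$, $\operatorname{Var}(X_n^i)=\sigma^2n\log n+O(n)$, where $$\sigma^2=\frac{\pi_0 p_{00}p_{01}}{H^3}\Big(\log(p_{00}/p_{01})+\frac{H_1-H_0}{p_{01}+p_{10}}\Big)^2+\frac{\pi_1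 p_{10}p_{11}}{H^3}\Big(\log(p_{10}/p_{11})+\frac{H_1-H_0}{p_{01}+p_{10}}\Big)^2.$$
   Context: $0\log0:=0$. $\pi_0=p_{10}/(p_{01}+p_{10})$, $\pi_1=p_{01}/(p_{01}+p_{10})$, $H_i=-\sum_jp_{ij}\log p_{ij}$, $H=\pi_0H_0+\pi_1H_1$. *)

theory Defs
  imports "HOL-Probability.Probability" "HOL-Library.Landau_Symbols"
begin

definition xlogx :: "real \<Rightarrow> real" where
  "xlogx x = (if x = 0 then 0 else x * ln x)"

definition stat_pi :: "(nat \<Rightarrow> nat \<Rightarrow> real) \<Rightarrow> nat \<Rightarrow> real" where
  "stat_pi p i = (if i = 0 then p 1 0 / (p 0 1 + p 1 0) else p 0 1 / (p 0 1 + p 1 0))"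

definition row_entropy :: "(nat \<Rightarrow> nat \<Rightarrow> real) \<Rightarrow> nat \<Rightarrow> real" where
  "row_entropy p i = - (\<Sum>j\<in>{0,1}. xlogx (p i j))"

definition entropy_H :: "(nat \<Rightarrow> nat \<Rightarrow> real) \<Rightarrow> real" where
  "entropy_H p = stat_pi p 0 * row_entropy p 0 + stat_pi p 1 * row_entropy p 1"

definition eta1 :: "(nat \<Rightarrow> nat \<Rightarrow> real) \<Rightarrow> nat \<Rightarrow> nat \<Rightarrow> real" where
  "eta1 p i n =
     (1 / entropy_H p) * (xlogx (real n)
        - measure_pmf.expectation (binomial_pmf n (p i 0))
            (\<lambda>k. xlogx (real k) + xlogx (real n - real k)))
     + stat_pi p (1 - i) * (row_entropy p (1 - i) - row_entropy p i) / entropy_H p * real n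
     + (row_entropy p 1 - row_entropy p 0) / ((p 0 1 + p 1 0) * entropy_H p)
         * p i 0 * p i 1 ^ (n - 1) * real n"

definition eta2 :: "(nat \<Rightarrow> nat \<Rightarrow> real) \<Rightarrow> nat \<Rightarrow> nat \<Rightarrow> real" where
  "eta2 p i n = real n - eta1 p i n"

definition sigma2 :: "(nat \<Rightarrow> nat \<Rightarrow> real) \<Rightarrow> real" where
  "sigma2 p =
     stat_pi p 0 * p 0 0 * p 0 1 / entropy_H p ^ 3
       * (ln (p 0 0 / p 0 1) + (row_entropy p 1 - row_entropy p 0) / (p 0 1 + p 1 0)) ^ 2
   + stat_pi p 1 * p 1 0 * p 1 1 / entropy_H p ^ 3
       * (ln (p 1 0 / p 1 1) + (row_entropy p 1 - row_entropy p 0) / (p 0 1 + p 1 0)) ^ 2"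

definition pair_law :: "'a measure \<Rightarrow> (nat \<Rightarrow> nat \<Rightarrow> 'a \<Rightarrow> real) \<Rightarrow> (nat \<Rightarrow> nat \<Rightarrow> 'a \<Rightarrow> real)
     \<Rightarrow> nat \<Rightarrow> nat \<Rightarrow> (real \<times> real) measure" where
  "pair_law M X Z i n = distr M borel (\<lambda>\<omega>. (X i n \<omega>, Z i n \<omega>))"

text \<open>Law of the right-hand side of the recursion: I ~ B(n, p i 0), independent of
  independent copies of (X^0_k,Z^0_k) and (X^1_k,Z^1_k); mixture over the value k of I.\<close>
definition rhs_law :: "(nat \<Rightarrow> nat \<Rightarrow> real) \<Rightarrow> 'a measure \<Rightarrow> (nat \<Rightarrow> nat \<Rightarrow> 'a \<Rightarrow> real)
     \<Rightarrow> (nat \<Rightarrow> nat \<Rightarrow> 'a \<Rightarrow> real) \<Rightarrow> nat \<Rightarrow> nat \<Rightarrow> (real \<times> real) set \<Rightarrow> real" where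
  "rhs_law p M X Z i n A =
     (\<Sum>k\<le>n. pmf (binomial_pmf n (p i 0)) k *
        measure (distr (pair_law M X Z 0 k \<Otimes>\<^sub>M pair_law M X Z 1 (n - k)) borel
                   (\<lambda>((a, b), (c, d)). (a + c + eta1 p i n, b + d + eta2 p i n))) A)"

end

theory Submission
  imports Defs
begin

text \<open>Taking expectations in the distributional recursion gives, for the means and for the
  centred second moments, linear recursions \<open>f\<^sub>i(n) = E[f\<^sub>0(I) + f\<^sub>1(n - I)] + t\<^sub>i(n)\<close> with
  \<open>I \<sim> B(n, p\<^sub>i\<^sub>0)\<close>. The toll \<open>\<eta>\<close> is chosen so that \<open>n log n / H\<close>, plus \<open>c n\<close> in state \<open>0\<close>,
  solves the mean recursion exactly. For the centred second moments the toll is the variance of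
  the conditional mean; a second-order expansion of \<open>x log x\<close> around the binomial mean shows it
  to be \<open>\<alpha>\<^sub>i n + O(\<surd>n)\<close>. Since the stationary average of the \<open>\<alpha>\<^sub>i\<close> is \<open>\<sigma>\<^sup>2 H\<close>, the ansatz
  \<open>\<sigma>\<^sup>2 n log n + d\<^sub>i n\<close> solves the variance recursion up to \<open>O(\<surd>n)\<close>, and a maximum principle
  with the supersolution \<open>A n - B \<surd>n\<close>, which works because \<open>\<surd>p + \<surd>(1 - p) > 1\<close>, bounds the
  remaining error by \<open>O(n)\<close>.\<close>

section \<open>Binomial weights\<close>

definition binom_weight :: "nat \<Rightarrow> real \<Rightarrow> nat \<Rightarrow> real" where
  "binom_weight n q k = real (n choose k) * q ^ k * (1 - q) ^ (n - k)"

lemma binom_weight_nonneg: "0 \<le> q \<Longrightarrow> q \<le> 1 \<Longrightarrow> 0 \<le> binom_weight n q k"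
  by (simp add: binom_weight_def)

lemma binom_weight_sum: "(\<Sum>k\<le>n. binom_weight n q k) = 1"
  using binomial_ring[of q "1 - q" n] by (simp add: binom_weight_def)

lemma pmf_binomial_eq_binom_weight:
  "0 \<le> q \<Longrightarrow> q \<le> 1 \<Longrightarrow> pmf (binomial_pmf n q) k = binom_weight n q k"
  by (simp add: binom_weight_def)

lemma expectation_binomial_eq_binom_weight:
  assumes "0 \<le> q" "q \<le> 1"
  shows "measure_pmf.expectation (binomial_pmf n q) g = (\<Sum>k\<le>n. binom_weight n q k * g k)"
  using assms by (simp add: expectation_binomial_pmf' binom_weight_def)

lemma binom_weight_shift:
  "(\<Sum>k\<le>Suc m. binom_weight (Suc m) q k * real k * g (k - 1))
     = real (Suc m) * q * (\<Sum>j\<le>m. binom_weight m q j * g j)"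
proof -
  have "(\<Sum>k\<le>Suc m. binom_weight (Suc m) q k * real k * g (k - 1))
      = (\<Sum>j\<le>m. binom_weight (Suc m) q (Suc j) * real (Suc j) * g j)"
    by (subst sum.atMost_Suc_shift) simp
  also have "\<dots> = (\<Sum>j\<le>m. real (Suc m) * q * (binom_weight m q j * g j))"
  proof (rule sum.cong)
    fix j assume "j \<in> {..m}"
    have e: "real (Suc m choose Suc j) * real (Suc j) = real (Suc m) * real (m choose j)"
      using Suc_times_binomial_eq[of m j] by (metis of_nat_mult)
    have "binom_weight (Suc m) q (Suc j) * real (Suc j)
        = (real (Suc m choose Suc j) * real (Suc j)) * q * q ^ j * (1 - q) ^ (m - j)"
      by (simp add: binom_weight_def)
    also have "\<dots> = real (Suc m) * q * binom_weight m q j"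
      by (simp only: e) (simp add: binom_weight_def)
    finally show "binom_weight (Suc m) q (Suc j) * real (Suc j) * g j
        = real (Suc m) * q * (binom_weight m q j * g j)"
      by simp
  qed simp
  finally show ?thesis
    by (simp add: sum_distrib_left)
qed

fun fall_fact :: "real \<Rightarrow> nat \<Rightarrow> real" where
  "fall_fact x 0 = 1"
| "fall_fact x (Suc j) = x * fall_fact (x - 1) j"

lemma fall_fact_1: "fall_fact x 1 = x" by simp
lemma fall_fact_2: "fall_fact x 2 = x * (x - 1)" by (simp add: numeral_eq_Suc)
lemma fall_fact_3: "fall_fact x 3 = x * (x - 1) * (x - 2)"
  by (simp add: numeral_eq_Suc algebra_simps)
lemma fall_fact_4: "fall_fact x 4 = x * (x - 1) * (x - 2) * (x - 3)"
  by (simp add: numeral_eq_Suc algebra_simps)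

lemma binom_weight_factorial_moment:
  "(\<Sum>k\<le>n. binom_weight n q k * fall_fact (real k) j) = fall_fact (real n) j * q ^ j"
proof (induction j arbitrary: n)
  case 0
  then show ?case by (simp add: binom_weight_sum)
next
  case (Suc j)
  show ?case
  proof (cases n)
    case 0
    then show ?thesis by (simp add: binom_weight_def)
  next
    case (Suc m)
    have "(\<Sum>k\<le>n. binom_weight n q k * fall_fact (real k) (Suc j))
        = (\<Sum>k\<le>Suc m. binom_weight (Suc m) q k * real k * fall_fact (real (k - 1)) j)"
      unfolding Suc by (intro sum.cong refl, rename_tac k, case_tac k) auto
    also have "\<dots> = real (Suc m) * q * (fall_fact (real m) j * q ^ j)"
      by (subst binom_weight_shift[where g = "\<lambda>k. fall_fact (real k) j"]) (simp add: Suc.IH)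
    also have "\<dots> = fall_fact (real n) (Suc j) * q ^ Suc j"
      using Suc by simp
    finally show ?thesis .
  qed
qed

text \<open>Every polynomial of degree at most four is a combination of falling factorials, so its
  binomial expectation follows from the factorial moments.\<close>

lemma binom_weight_poly4:
  "(\<Sum>k\<le>n. binom_weight n q k * (c0 + c1 * fall_fact (real k) 1 + c2 * fall_fact (real k) 2
        + c3 * fall_fact (real k) 3 + c4 * fall_fact (real k) 4))
   = c0 + c1 * fall_fact (real n) 1 * q + c2 * fall_fact (real n) 2 * q^2
        + c3 * fall_fact (real n) 3 * q^3 + c4 * fall_fact (real n) 4 * q^4"
proof -
  have "(\<Sum>k\<le>n. binom_weight n q k * (c0 + c1 * fall_fact (real k) 1 + c2 * fall_fact (real k) 2
        + c3 * fall_fact (real k) 3 + c4 * fall_fact (real k) 4))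
    = c0 * (\<Sum>k\<le>n. binom_weight n q k) + c1 * (\<Sum>k\<le>n. binom_weight n q k * fall_fact (real k) 1)
      + c2 * (\<Sum>k\<le>n. binom_weight n q k * fall_fact (real k) 2)
      + c3 * (\<Sum>k\<le>n. binom_weight n q k * fall_fact (real k) 3)
      + c4 * (\<Sum>k\<le>n. binom_weight n q k * fall_fact (real k) 4)"
    by (simp add: sum.distrib sum_distrib_left algebra_simps)
  then show ?thesis
    by (simp only: binom_weight_factorial_moment binom_weight_sum) simp
qed

lemma binom_weight_mean: "(\<Sum>k\<le>n. binom_weight n q k * real k) = real n * q"
  using binom_weight_factorial_moment[of n q 1] by simp

lemma binom_weight_variance:
  "(\<Sum>k\<le>n. binom_weight n q k * (real k - real n * q)^2) = real n * q * (1 - q)"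
proof -
  define a where "a = real n * q"
  have "(\<Sum>k\<le>n. binom_weight n q k * (real k - a)^2)
      = (\<Sum>k\<le>n. binom_weight n q k * (a^2 + (1 - 2*a) * fall_fact (real k) 1
           + 1 * fall_fact (real k) 2 + 0 * fall_fact (real k) 3 + 0 * fall_fact (real k) 4))"
    by (rule sum.cong[OF refl]) (simp add: fall_fact_2 power2_eq_square algebra_simps)
  also have "\<dots> = real n * q * (1 - q)"
    by (subst binom_weight_poly4, unfold a_def fall_fact_1 fall_fact_2, algebra)
  finally show ?thesis unfolding a_def .
qed

lemma binom_weight_central_moment4:
  "(\<Sum>k\<le>n. binom_weight n q k * (real k - real n * q)^4)
     = real n * q * (1 - q) * (1 + 3 * (real n - 2) * q * (1 - q))"
proof -
  define a where "a = real n * q"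
  have "(\<Sum>k\<le>n. binom_weight n q k * (real k - a)^4)
      = (\<Sum>k\<le>n. binom_weight n q k * (a^4 + (1 - 4*a + 6*a^2 - 4*a^3) * fall_fact (real k) 1
           + (7 - 12*a + 6*a^2) * fall_fact (real k) 2 + (6 - 4*a) * fall_fact (real k) 3
           + 1 * fall_fact (real k) 4))"
    by (rule sum.cong[OF refl])
      (simp add: fall_fact_2 fall_fact_3 fall_fact_4 power2_eq_square power3_eq_cube
        power4_eq_xxxx algebra_simps)
  also have "\<dots> = real n * q * (1 - q) * (1 + 3 * (real n - 2) * q * (1 - q))"
    by (subst binom_weight_poly4, unfold a_def fall_fact_1 fall_fact_2 fall_fact_3 fall_fact_4, algebra)
  finally show ?thesis unfolding a_def .
qed

lemma binom_weight_central_moment4_le: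
  assumes "0 \<le> q" "q \<le> 1"
  shows "(\<Sum>k\<le>n. binom_weight n q k * (real k - real n * q)^4) \<le> 4 * (real n)^2"
proof -
  define u where "u = q * (1 - q)"
  have u0: "0 \<le> u" using assms unfolding u_def by simp
  have "0 \<le> (q - 1/2)^2" by simp
  then have u1: "u \<le> 1/4" unfolding u_def by (simp add: power2_eq_square algebra_simps)
  have "real n * q * (1 - q) * (1 + 3 * (real n - 2) * q * (1 - q))
      = 3 * (real n)^2 * u^2 + real n * u - 6 * real n * u^2"
    unfolding u_def by (simp add: power2_eq_square algebra_simps)
  also have "\<dots> \<le> 3 * (real n)^2 + real n"
  proof -
    have "u^2 \<le> 1" using u0 u1 by (simp add: power2_eq_square mult_le_one)
    then have "3 * (real n)^2 * u^2 \<le> 3 * (real n)^2" by (simp add: mult_left_le)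
    moreover have "real n * u \<le> real n" using u1 by (simp add: mult_left_le)
    moreover have "0 \<le> 6 * real n * u^2" using u0 by simp
    ultimately show ?thesis by linarith
  qed
  also have "\<dots> \<le> 4 * (real n)^2"
    by (cases n) (auto simp: power2_eq_square)
  finally show ?thesis by (simp add: binom_weight_central_moment4)
qed

lemma binom_weight_compl_mean:
  "(\<Sum>k\<le>n. binom_weight n q k * (real n - real k)) = real n * (1 - q)"
  using binom_weight_sum[of n q] binom_weight_mean[of n q]
  by (simp add: right_diff_distrib sum_subtractf algebra_simps flip: sum_distrib_left)

lemma binom_weight_compl_variance:
  "(\<Sum>k\<le>n. binom_weight n q k * (real n - real k - real n * (1 - q))^2) = real n * q * (1 - q)"
proof -
  have "(real n - real k - real n * (1 - q))^2 = (real k - real n * q)^2" for k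
    by (simp add: power2_eq_square algebra_simps)
  then show ?thesis by (simp add: binom_weight_variance)
qed

section \<open>Convexity bounds for \<open>x log x\<close> and \<open>\<surd>x\<close>\<close>

lemma xlogx_eq: "0 < x \<Longrightarrow> xlogx x = x * ln x"
  by (simp add: xlogx_def)

definition xlogx_remainder :: "real \<Rightarrow> real \<Rightarrow> real" where
  "xlogx_remainder a x = xlogx x - xlogx a - (1 + ln a) * (x - a)"

lemma xlogx_remainder_bounds:
  assumes a: "0 < a" and x: "0 \<le> x"
  shows "0 \<le> xlogx_remainder a x" "xlogx_remainder a x \<le> (x - a)^2 / a"
proof -
  have "0 \<le> xlogx_remainder a x \<and> xlogx_remainder a x \<le> (x - a)^2 / a"
  proof (cases "x = 0")
    case True
    then show ?thesis
      using a by (simp add: xlogx_remainder_def xlogx_def power2_eq_square algebra_simps)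
  next
    case False
    then have xp: "0 < x" using x by simp
    have e: "xlogx_remainder a x = x * ln (x / a) - x + a"
      using xp a by (simp add: xlogx_remainder_def xlogx_def ln_div algebra_simps)
    have "ln (a / x) \<le> a / x - 1" "ln (x / a) \<le> x / a - 1"
      using xp a by (intro ln_le_minus_one; simp)+
    moreover have "ln (x / a) = - ln (a / x)" using xp a by (simp add: ln_div)
    ultimately have "1 - a / x \<le> ln (x / a)" "ln (x / a) \<le> x / a - 1" by linarith+
    then have "x * (1 - a / x) \<le> x * ln (x / a)" "x * ln (x / a) \<le> x * (x / a - 1)"
      using xp by (simp_all add: mult_left_mono)
    moreover have "(x - a)^2 / a = x * (x / a - 1) - x + a"
      using a by (simp add: power2_eq_square field_simps)
    ultimately show ?thesis using e xp by (simp add: algebra_simps)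
  qed
  then show "0 \<le> xlogx_remainder a x" "xlogx_remainder a x \<le> (x - a)^2 / a" by auto
qed

text \<open>The upper bound comes from \<open>x log x \<le> a log a + (1 + log a)(x - a) + (x - a)\<^sup>2/a\<close>.\<close>

lemma weighted_xlogx_bounds:
  fixes w y :: "nat \<Rightarrow> real"
  assumes w: "(\<Sum>k\<le>n. w k) = 1" "\<And>k. k \<le> n \<Longrightarrow> 0 \<le> w k"
    and y: "\<And>k. k \<le> n \<Longrightarrow> 0 \<le> y k"
    and mean: "(\<Sum>k\<le>n. w k * y k) = a" and a: "0 < a"
  shows "xlogx a \<le> (\<Sum>k\<le>n. w k * xlogx (y k))"
    "(\<Sum>k\<le>n. w k * xlogx (y k)) \<le> xlogx a + (\<Sum>k\<le>n. w k * (y k - a)^2) / a"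
proof -
  have "(\<Sum>k\<le>n. w k * xlogx (y k)) = xlogx a * (\<Sum>k\<le>n. w k)
      + (1 + ln a) * ((\<Sum>k\<le>n. w k * y k) - a * (\<Sum>k\<le>n. w k))
      + (\<Sum>k\<le>n. w k * xlogx_remainder a (y k))"
    by (simp add: xlogx_remainder_def sum.distrib sum_subtractf sum_distrib_left
        sum_distrib_right algebra_simps)
  then have e: "(\<Sum>k\<le>n. w k * xlogx (y k)) = xlogx a + (\<Sum>k\<le>n. w k * xlogx_remainder a (y k))"
    using w(1) mean by simp
  have "0 \<le> (\<Sum>k\<le>n. w k * xlogx_remainder a (y k))"
    using w y a by (intro sum_nonneg mult_nonneg_nonneg xlogx_remainder_bounds) auto
  moreover have "(\<Sum>k\<le>n. w k * xlogx_remainder a (y k)) \<le> (\<Sum>k\<le>n. w k * ((y k - a)^2 / a))"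
    using w y a by (intro sum_mono mult_left_mono xlogx_remainder_bounds) auto
  moreover have "(\<Sum>k\<le>n. w k * ((y k - a)^2 / a)) = (\<Sum>k\<le>n. w k * (y k - a)^2) / a"
    by (simp add: sum_divide_distrib)
  ultimately show "xlogx a \<le> (\<Sum>k\<le>n. w k * xlogx (y k))"
    "(\<Sum>k\<le>n. w k * xlogx (y k)) \<le> xlogx a + (\<Sum>k\<le>n. w k * (y k - a)^2) / a"
    using e by auto
qed

lemma binom_weight_xlogx_split_bounds:
  assumes q: "0 < q" "q < 1" and n: "0 < n"
  defines "E \<equiv> (\<Sum>k\<le>n. binom_weight n q k * (xlogx (real k) + xlogx (real n - real k)))"
  shows "xlogx (real n * q) + xlogx (real n * (1 - q)) \<le> E"
    "E \<le> xlogx (real n * q) + xlogx (real n * (1 - q)) + 1"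
proof -
  have w: "(\<Sum>k\<le>n. binom_weight n q k) = 1" "\<And>k. k \<le> n \<Longrightarrow> 0 \<le> binom_weight n q k"
    using q by (auto intro: binom_weight_sum binom_weight_nonneg)
  have a: "0 < real n * q" and b: "0 < real n * (1 - q)" using q n by auto
  have A: "xlogx (real n * q) \<le> (\<Sum>k\<le>n. binom_weight n q k * xlogx (real k))"
    "(\<Sum>k\<le>n. binom_weight n q k * xlogx (real k))
       \<le> xlogx (real n * q) + (\<Sum>k\<le>n. binom_weight n q k * (real k - real n * q)^2) / (real n * q)"
    using weighted_xlogx_bounds[where w = "binom_weight n q" and y = "\<lambda>k. real k"] w a
    by (simp_all add: binom_weight_mean)
  have B: "xlogx (real n * (1 - q)) \<le> (\<Sum>k\<le>n. binom_weight n q k * xlogx (real n - real k))"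
    "(\<Sum>k\<le>n. binom_weight n q k * xlogx (real n - real k))
       \<le> xlogx (real n * (1 - q))
         + (\<Sum>k\<le>n. binom_weight n q k * (real n - real k - real n * (1 - q))^2) / (real n * (1 - q))"
    using weighted_xlogx_bounds[where w = "binom_weight n q" and y = "\<lambda>k. real n - real k"] w b
    by (simp_all add: binom_weight_compl_mean)
  have "(\<Sum>k\<le>n. binom_weight n q k * (real k - real n * q)^2) / (real n * q) = 1 - q"
    "(\<Sum>k\<le>n. binom_weight n q k * (real n - real k - real n * (1 - q))^2) / (real n * (1 - q)) = q"
    using q n by (simp_all add: binom_weight_variance binom_weight_compl_variance)
  moreover have "E = (\<Sum>k\<le>n. binom_weight n q k * xlogx (real k))
      + (\<Sum>k\<le>n. binom_weight n q k * xlogx (real n - real k))"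
    unfolding E_def by (simp add: distrib_left sum.distrib)
  ultimately show "xlogx (real n * q) + xlogx (real n * (1 - q)) \<le> E"
    "E \<le> xlogx (real n * q) + xlogx (real n * (1 - q)) + 1"
    using A B by auto
qed

lemma sqrt_ge_quadratic_minorant:
  assumes c: "0 < c" and y: "0 \<le> y"
  shows "sqrt c + (y - c) / (2 * sqrt c) - (y - c)^2 / (2 * c * sqrt c) \<le> sqrt y"
proof -
  define t where "t = sqrt y"
  define b where "b = sqrt c"
  have t: "0 \<le> t" and b: "0 < b" and yt: "y = t^2" and cb: "c = b^2"
    using c y by (auto simp: t_def b_def)
  have "0 \<le> t * (t - b)^2 * (t + 2 * b)" using t b by simp
  then have "3 * c * y - y^2 \<le> t * (2 * c * b)"
    unfolding yt cb by (simp add: power2_eq_square algebra_simps)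
  moreover have "sqrt c + (y - c) / (2 * sqrt c) - (y - c)^2 / (2 * c * sqrt c)
      = (3 * c * y - y^2) / (2 * c * b)"
    using b unfolding b_def[symmetric] cb by (simp add: field_simps power2_eq_square)
  ultimately show ?thesis
    using b c unfolding t_def by (simp add: divide_le_eq mult_ac)
qed

lemma weighted_sqrt_lower:
  fixes w y :: "nat \<Rightarrow> real"
  assumes w: "(\<Sum>k\<le>n. w k) = 1" "\<And>k. k \<le> n \<Longrightarrow> 0 \<le> w k"
    and y: "\<And>k. k \<le> n \<Longrightarrow> 0 \<le> y k"
    and mean: "(\<Sum>k\<le>n. w k * y k) = c" and c: "0 < c"
  shows "sqrt c - (\<Sum>k\<le>n. w k * (y k - c)^2) / (2 * c * sqrt c) \<le> (\<Sum>k\<le>n. w k * sqrt (y k))"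
proof -
  define m where "m k = sqrt c + (y k - c) / (2 * sqrt c) - (y k - c)^2 / (2 * c * sqrt c)" for k
  have "(\<Sum>k\<le>n. w k * m k) = sqrt c * (\<Sum>k\<le>n. w k)
      + ((\<Sum>k\<le>n. w k * y k) - c * (\<Sum>k\<le>n. w k)) / (2 * sqrt c)
      - (\<Sum>k\<le>n. w k * (y k - c)^2) / (2 * c * sqrt c)"
    unfolding m_def
    by (simp add: sum.distrib sum_subtractf sum_distrib_left sum_divide_distrib
        diff_divide_distrib add_divide_distrib right_diff_distrib distrib_left mult.commute)
  also have "\<dots> = sqrt c - (\<Sum>k\<le>n. w k * (y k - c)^2) / (2 * c * sqrt c)"
    using w(1) mean by simp
  finally have "(\<Sum>k\<le>n. w k * m k)
      = sqrt c - (\<Sum>k\<le>n. w k * (y k - c)^2) / (2 * c * sqrt c)" .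
  moreover have "(\<Sum>k\<le>n. w k * m k) \<le> (\<Sum>k\<le>n. w k * sqrt (y k))"
    using w y c unfolding m_def by (intro sum_mono mult_left_mono sqrt_ge_quadratic_minorant) auto
  ultimately show ?thesis by simp
qed

text \<open>Splitting \<open>n\<close> binomially gains a constant fraction of \<open>\<surd>n\<close>, because
  \<open>\<surd>q + \<surd>(1 - q) > 1\<close>.\<close>

lemma binom_weight_sqrt_split_lower:
  assumes q: "0 < q" "q < 1" and n: "0 < n"
  shows "sqrt (real n) * (sqrt q + sqrt (1 - q))
      - ((1 - q) / (2 * sqrt (real n * q)) + q / (2 * sqrt (real n * (1 - q))))
     \<le> (\<Sum>k\<le>n. binom_weight n q k * (sqrt (real k) + sqrt (real n - real k)))"
proof -
  have w: "(\<Sum>k\<le>n. binom_weight n q k) = 1" "\<And>k. k \<le> n \<Longrightarrow> 0 \<le> binom_weight n q k"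
    using q by (auto intro: binom_weight_sum binom_weight_nonneg)
  define a where "a = real n * q"
  define b where "b = real n * (1 - q)"
  have a: "0 < a" and b: "0 < b" using q n by (auto simp: a_def b_def)
  have "(\<Sum>k\<le>n. binom_weight n q k * real k) = a"
    "(\<Sum>k\<le>n. binom_weight n q k * (real n - real k)) = b"
    unfolding a_def b_def by (rule binom_weight_mean binom_weight_compl_mean)+
  moreover have "(\<Sum>k\<le>n. binom_weight n q k * (real k - a)^2) = a * (1 - q)"
    "(\<Sum>k\<le>n. binom_weight n q k * (real n - real k - b)^2) = b * q"
    unfolding a_def b_def by (simp_all add: binom_weight_variance binom_weight_compl_variance)
  ultimately have "sqrt a - a * (1 - q) / (2 * a * sqrt a) \<le> (\<Sum>k\<le>n. binom_weight n q k * sqrt (real k))"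
    "sqrt b - b * q / (2 * b * sqrt b) \<le> (\<Sum>k\<le>n. binom_weight n q k * sqrt (real n - real k))"
    using weighted_sqrt_lower[OF w, of "\<lambda>k. real k" a] weighted_sqrt_lower[OF w, of "\<lambda>k. real n - real k" b] a b
    by auto
  moreover have "sqrt a + sqrt b = sqrt (real n) * (sqrt q + sqrt (1 - q))"
    unfolding a_def b_def real_sqrt_mult by (simp add: algebra_simps)
  moreover have "a * (1 - q) / (2 * a * sqrt a) = (1 - q) / (2 * sqrt a)" using a by simp
  moreover have "b * q / (2 * b * sqrt b) = q / (2 * sqrt b)" using b by simp
  ultimately show ?thesis unfolding a_def b_def by (simp add: sum.distrib distrib_left)
qed

lemma sqrt_sum_compl_gt_1: "0 < q \<Longrightarrow> q < 1 \<Longrightarrow> 1 < sqrt q + sqrt (1 - q)"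
proof -
  assume q: "0 < q" "q < 1"
  have "(sqrt q + sqrt (1 - q))^2 = 1 + 2 * sqrt q * sqrt (1 - q)"
    using q by (simp add: power2_eq_square algebra_simps)
  moreover have "0 < sqrt q * sqrt (1 - q)" using q by simp
  ultimately have "1^2 < (sqrt q + sqrt (1 - q))^2" by simp
  then show ?thesis by (rule power_less_imp_less_base) (use q in simp)
qed

section \<open>Weighted variances\<close>

lemma weighted_variance_shift:
  fixes w g :: "nat \<Rightarrow> real"
  assumes s1: "(\<Sum>k\<le>n. w k) = 1"
  shows "(\<Sum>k\<le>n. w k * (g k + c)^2) - (\<Sum>k\<le>n. w k * (g k + c))^2
       = (\<Sum>k\<le>n. w k * (g k)^2) - (\<Sum>k\<le>n. w k * g k)^2"
proof -
  have "(\<Sum>k\<le>n. w k * (g k + c)^2)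
      = (\<Sum>k\<le>n. w k * (g k)^2) + 2 * c * (\<Sum>k\<le>n. w k * g k) + c^2 * (\<Sum>k\<le>n. w k)"
    by (simp add: power2_eq_square algebra_simps sum.distrib sum_distrib_left)
  moreover have "(\<Sum>k\<le>n. w k * (g k + c)) = (\<Sum>k\<le>n. w k * g k) + c * (\<Sum>k\<le>n. w k)"
    by (simp add: distrib_left sum.distrib sum_distrib_left mult.commute)
  ultimately show ?thesis unfolding s1 by (simp add: power2_eq_square algebra_simps)
qed

lemma weighted_mean_square_le:
  fixes w g :: "nat \<Rightarrow> real"
  assumes s1: "(\<Sum>k\<le>n. w k) = 1" and wn: "\<And>k. k \<le> n \<Longrightarrow> 0 \<le> w k"
  shows "(\<Sum>k\<le>n. w k * g k)^2 \<le> (\<Sum>k\<le>n. w k * (g k)^2)"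
proof -
  define E where "E = (\<Sum>k\<le>n. w k * g k)"
  have "(\<Sum>k\<le>n. w k * (g k - E)) = 0"
    using s1 by (simp add: right_diff_distrib sum_subtractf E_def flip: sum_distrib_right)
  then have "(\<Sum>k\<le>n. w k * (g k - E)^2) = (\<Sum>k\<le>n. w k * (g k)^2) - E^2"
    using weighted_variance_shift[OF s1, of g "- E"] unfolding E_def by simp
  moreover have "0 \<le> (\<Sum>k\<le>n. w k * (g k - E)^2)" using wn by (intro sum_nonneg) auto
  ultimately show ?thesis unfolding E_def by simp
qed

lemma weighted_cross_term_le:
  fixes w f g :: "nat \<Rightarrow> real"
  assumes wn: "\<And>k. k \<le> n \<Longrightarrow> 0 \<le> w k" and t: "0 < t"
  shows "\<bar>2 * (\<Sum>k\<le>n. w k * (f k * g k))\<bar>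
      \<le> t * (\<Sum>k\<le>n. w k * (f k)^2) + (1 / t) * (\<Sum>k\<le>n. w k * (g k)^2)"
proof -
  have "\<bar>2 * (\<Sum>k\<le>n. w k * (f k * g k))\<bar> \<le> (\<Sum>k\<le>n. \<bar>2 * (w k * (f k * g k))\<bar>)"
    unfolding sum_distrib_left by (rule sum_abs)
  also have "\<dots> \<le> (\<Sum>k\<le>n. t * (w k * (f k)^2) + (1 / t) * (w k * (g k)^2))"
  proof (rule sum_mono)
    fix k assume k: "k \<in> {..n}"
    have "0 \<le> (t * f k - g k)^2 / t" "0 \<le> (t * f k + g k)^2 / t" using t by simp_all
    moreover have "(t * f k - g k)^2 / t = t * (f k)^2 - 2 * (f k * g k) + (g k)^2 / t"
      "(t * f k + g k)^2 / t = t * (f k)^2 + 2 * (f k * g k) + (g k)^2 / t"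
      using t by (simp_all add: power2_eq_square field_simps)
    ultimately have "\<bar>2 * (f k * g k)\<bar> \<le> t * (f k)^2 + (g k)^2 / t" by linarith
    then have "w k * \<bar>2 * (f k * g k)\<bar> \<le> w k * (t * (f k)^2 + (g k)^2 / t)"
      using wn k by (intro mult_left_mono) auto
    then show "\<bar>2 * (w k * (f k * g k))\<bar> \<le> t * (w k * (f k)^2) + (1 / t) * (w k * (g k)^2)"
      using wn k by (simp add: abs_mult algebra_simps)
  qed
  also have "\<dots> = t * (\<Sum>k\<le>n. w k * (f k)^2) + (1 / t) * (\<Sum>k\<le>n. w k * (g k)^2)"
    by (simp only: sum.distrib sum_distrib_left[symmetric])
  finally show ?thesis .
qed

lemma weighted_variance_perturbation:
  fixes w g lam rho :: "nat \<Rightarrow> real"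
  assumes s1: "(\<Sum>k\<le>n. w k) = 1" and wn: "\<And>k. k \<le> n \<Longrightarrow> 0 \<le> w k"
    and gdec: "\<And>k. k \<le> n \<Longrightarrow> g k = c + lam k + rho k"
    and l0: "(\<Sum>k\<le>n. w k * lam k) = 0" and t: "0 < t"
  shows "\<bar>((\<Sum>k\<le>n. w k * (g k)^2) - (\<Sum>k\<le>n. w k * g k)^2) - (\<Sum>k\<le>n. w k * (lam k)^2)\<bar>
     \<le> t * (\<Sum>k\<le>n. w k * (lam k)^2) + (1 + 1 / t) * (\<Sum>k\<le>n. w k * (rho k)^2)"
proof -
  define A where "A = (\<Sum>k\<le>n. w k * (lam k)^2)"
  define B where "B = (\<Sum>k\<le>n. w k * (rho k)^2)"
  define X where "X = (\<Sum>k\<le>n. w k * (lam k * rho k))"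
  define E where "E = (\<Sum>k\<le>n. w k * rho k)"
  have "(\<Sum>k\<le>n. w k * (g k)^2) - (\<Sum>k\<le>n. w k * g k)^2
      = (\<Sum>k\<le>n. w k * (lam k + rho k)^2) - (\<Sum>k\<le>n. w k * (lam k + rho k))^2"
    using weighted_variance_shift[OF s1, of "\<lambda>k. lam k + rho k" c] gdec
    by (simp add: add_ac)
  also have "(\<Sum>k\<le>n. w k * (lam k + rho k)^2) = A + B + 2 * X"
    unfolding A_def B_def X_def
    by (simp add: power2_eq_square algebra_simps sum.distrib sum_distrib_left)
  also have "(\<Sum>k\<le>n. w k * (lam k + rho k)) = E"
    using l0 unfolding E_def by (simp add: distrib_left sum.distrib)
  finally have var: "(\<Sum>k\<le>n. w k * (g k)^2) - (\<Sum>k\<le>n. w k * g k)^2 - A = B - E^2 + 2 * X"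
    by simp
  have "E^2 \<le> B" unfolding E_def B_def by (rule weighted_mean_square_le[OF s1 wn])
  moreover have "\<bar>2 * X\<bar> \<le> t * A + (1 / t) * B"
    unfolding X_def A_def B_def by (rule weighted_cross_term_le[OF wn t])
  moreover have "0 \<le> E^2" and "(1 + 1 / t) * B = B + (1 / t) * B"
    by (simp_all add: algebra_simps)
  ultimately have "\<bar>B - E^2 + 2 * X\<bar> \<le> t * A + (1 + 1 / t) * B"
    by (simp only: abs_le_iff) linarith
  then show ?thesis using var unfolding A_def B_def by simp
qed

section \<open>A comparison principle for the splitting recursion\<close>

lemma split_sum_abs_le:
  fixes u :: "nat \<Rightarrow> nat \<Rightarrow> real" and \<phi> w :: "nat \<Rightarrow> real"
  assumes n: "1 \<le> n" and wn: "\<And>k. 0 \<le> w k"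
    and small: "\<And>j k. j \<in> {0,1} \<Longrightarrow> k < n \<Longrightarrow> \<bar>u j k\<bar> \<le> \<phi> k"
    and M: "\<And>j. j \<in> {0,1} \<Longrightarrow> \<bar>u j n\<bar> \<le> M"
  shows "\<bar>\<Sum>k\<le>n. w k * (u 0 k + u 1 (n - k))\<bar>
      \<le> (\<Sum>k\<le>n. w k * (\<phi> k + \<phi> (n - k))) + (w 0 + w n) * (M - \<phi> n)"
proof -
  have ends: "{..n} = insert 0 (insert n {1..<n})" "0 \<notin> insert n {1..<n}" "n \<notin> {1..<n}"
    using n by auto
  have "\<bar>\<Sum>k\<in>{1..<n}. w k * (u 0 k + u 1 (n - k))\<bar>
      \<le> (\<Sum>k\<in>{1..<n}. \<bar>w k * (u 0 k + u 1 (n - k))\<bar>)"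
    by (rule sum_abs)
  also have "\<dots> \<le> (\<Sum>k\<in>{1..<n}. w k * (\<phi> k + \<phi> (n - k)))"
  proof (rule sum_mono)
    fix k assume k: "k \<in> {1..<n}"
    have "\<bar>u 0 k + u 1 (n - k)\<bar> \<le> \<phi> k + \<phi> (n - k)"
      using small[of 0 k] small[of 1 "n - k"] k by (auto intro: abs_triangle_ineq[THEN order_trans])
    then show "\<bar>w k * (u 0 k + u 1 (n - k))\<bar> \<le> w k * (\<phi> k + \<phi> (n - k))"
      using wn by (simp add: abs_mult mult_left_mono)
  qed
  finally have mid: "\<bar>\<Sum>k\<in>{1..<n}. w k * (u 0 k + u 1 (n - k))\<bar>
      \<le> (\<Sum>k\<in>{1..<n}. w k * (\<phi> k + \<phi> (n - k)))" .
  have "\<bar>u 0 0 + u 1 n\<bar> \<le> \<phi> 0 + M" "\<bar>u 0 n + u 1 0\<bar> \<le> M + \<phi> 0"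
    using small[of 0 0] small[of 1 0] M[of 0] M[of 1] n by (auto intro: abs_triangle_ineq[THEN order_trans])
  then have "\<bar>w 0 * (u 0 0 + u 1 n)\<bar> \<le> w 0 * (\<phi> 0 + M)"
    "\<bar>w n * (u 0 n + u 1 0)\<bar> \<le> w n * (M + \<phi> 0)"
    using wn by (simp_all add: abs_mult mult_left_mono)
  then show ?thesis
    unfolding ends(1) using ends(2,3) mid by (simp add: algebra_simps)
qed

text \<open>The weights of the two degenerate splits \<open>k = 0\<close>
  and \<open>k = n\<close>, which would make the recursion implicit, must have total mass below one.\<close>

lemma split_recursion_comparison:
  fixes u :: "nat \<Rightarrow> nat \<Rightarrow> real" and \<phi> e :: "nat \<Rightarrow> real" and W :: "nat \<Rightarrow> nat \<Rightarrow> nat \<Rightarrow> real"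
  assumes N: "2 \<le> N"
    and Wnn: "\<And>i n k. i \<in> {0,1} \<Longrightarrow> 0 \<le> W i n k"
    and Wlt: "\<And>i n. i \<in> {0,1} \<Longrightarrow> 2 \<le> n \<Longrightarrow> W i n n + W i n 0 < 1"
    and rec: "\<And>i n. i \<in> {0,1} \<Longrightarrow> N \<le> n \<Longrightarrow>
                \<bar>u i n - (\<Sum>k\<le>n. W i n k * (u 0 k + u 1 (n - k)))\<bar> \<le> e n"
    and super: "\<And>i n. i \<in> {0,1} \<Longrightarrow> N \<le> n \<Longrightarrow>
                (\<Sum>k\<le>n. W i n k * (\<phi> k + \<phi> (n - k))) + e n \<le> \<phi> n"
    and base: "\<And>i k. i \<in> {0,1} \<Longrightarrow> k < N \<Longrightarrow> \<bar>u i k\<bar> \<le> \<phi> k"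
  shows "i \<in> {0,1} \<Longrightarrow> \<bar>u i n\<bar> \<le> \<phi> n"
proof (induction n arbitrary: i rule: less_induct)
  case (less n)
  show ?case
  proof (cases "n < N")
    case True
    then show ?thesis using base less.prems by auto
  next
    case False
    then have nN: "N \<le> n" and n2: "2 \<le> n" using N by auto
    define M where "M = max \<bar>u 0 n\<bar> \<bar>u 1 n\<bar>"
    have Mge: "\<And>j. j \<in> {0,1} \<Longrightarrow> \<bar>u j n\<bar> \<le> M" unfolding M_def by auto
    have bound: "\<bar>u j n\<bar> \<le> \<phi> n + (W j n 0 + W j n n) * (M - \<phi> n)" if j: "j \<in> {0,1}" for j
      using split_sum_abs_le[of n "W j n" u \<phi> M] rec[OF j nN] super[OF j nN] less.IH Mge Wnn[OF j] n2
      by fastforce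
    have "M \<le> \<phi> n"
    proof (rule ccontr)
      assume c: "\<not> M \<le> \<phi> n"
      obtain j where j: "j \<in> {0,1}" and Mj: "\<bar>u j n\<bar> = M" unfolding M_def by (metis insertCI max_def)
      have "(W j n 0 + W j n n) * (M - \<phi> n) < 1 * (M - \<phi> n)"
        using Wlt[OF j n2] c by (intro mult_strict_right_mono) auto
      then show False using bound[OF j] Mj by simp
    qed
    then show ?thesis using Mge[OF less.prems] by linarith
  qed
qed

section \<open>The two-state chain and the mean\<close>

locale two_state_chain =
  fixes p :: "nat \<Rightarrow> nat \<Rightarrow> real"
  assumes stoch: "\<And>i. i \<in> {0,1} \<Longrightarrow> p i 0 + p i 1 = 1"
    and pos: "\<And>i j. i \<in> {0,1} \<Longrightarrow> j \<in> {0,1} \<Longrightarrow> 0 < p i j \<and> p i j < 1"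
begin

lemma p0_pos: "i \<in> {0,1} \<Longrightarrow> 0 < p i 0" using pos[of i 0] by auto
lemma p0_lt_1: "i \<in> {0,1} \<Longrightarrow> p i 0 < 1" using pos[of i 0] by auto
lemma p1_pos: "i \<in> {0,1} \<Longrightarrow> 0 < p i 1" using pos[of i 1] by auto
lemma p1_lt_1: "i \<in> {0,1} \<Longrightarrow> p i 1 < 1" using pos[of i 1] by auto
lemma p1_eq: "i \<in> {0,1} \<Longrightarrow> p i 1 = 1 - p i 0" using stoch[of i] by simp

abbreviation H :: real where "H \<equiv> entropy_H p"

abbreviation entropy_gap :: real where
  "entropy_gap \<equiv> (row_entropy p 1 - row_entropy p 0) / (p 0 1 + p 1 0)"

lemma row_entropy_pos:
  assumes i: "i \<in> {0,1}"
  shows "0 < row_entropy p i"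
proof -
  have "xlogx (p i 0) < 0" "xlogx (p i 1) < 0"
    using p0_pos[OF i] p0_lt_1[OF i] p1_pos[OF i] p1_lt_1[OF i]
    by (simp_all add: xlogx_def mult_pos_neg)
  then show ?thesis by (simp add: row_entropy_def)
qed

lemma stat_pi_pos: "i \<in> {0,1} \<Longrightarrow> 0 < stat_pi p i"
  using p1_pos[of 0] p0_pos[of 1] by (auto simp: stat_pi_def)

lemma H_pos: "0 < H"
  unfolding entropy_H_def using stat_pi_pos row_entropy_pos by (simp add: add_pos_pos)

text \<open>\<open>split_prob i n k\<close> is the probability that a state-\<open>i\<close> node of size \<open>n\<close> sends \<open>k\<close>
  items to its \<open>0\<close>-child, i.e.\ \<open>P(I\<^sub>n\<^sup>i = k)\<close>.\<close>

definition split_prob :: "nat \<Rightarrow> nat \<Rightarrow> nat \<Rightarrow> real" where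
  "split_prob i n k = binom_weight n (p i 0) k"

lemma split_prob_nonneg: "i \<in> {0,1} \<Longrightarrow> 0 \<le> split_prob i n k"
  unfolding split_prob_def using p0_pos p0_lt_1 by (intro binom_weight_nonneg) (auto simp: less_imp_le)

lemma split_prob_sum: "(\<Sum>k\<le>n. split_prob i n k) = 1"
  unfolding split_prob_def by (rule binom_weight_sum)

lemma split_prob_sum_add:
  "(\<Sum>k\<le>n. split_prob i n k * (f k + c)) = (\<Sum>k\<le>n. split_prob i n k * f k) + c"
  using split_prob_sum[of i n] by (simp add: distrib_left sum.distrib sum_distrib_right[symmetric])

lemma split_prob_mean: "(\<Sum>k\<le>n. split_prob i n k * real k) = real n * p i 0"
  unfolding split_prob_def by (rule binom_weight_mean)

lemma split_prob_degenerate_lt: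
  assumes i: "i \<in> {0,1}" and n: "2 \<le> n"
  shows "split_prob i n n + split_prob i n 0 < 1"
proof -
  have "split_prob i n n = p i 0 ^ n" "split_prob i n 0 = p i 1 ^ n"
    using p1_eq[OF i] by (auto simp: split_prob_def binom_weight_def)
  moreover have "p i 0 ^ n < p i 0 ^ 1" "p i 1 ^ n < p i 1 ^ 1"
    using n p0_pos[OF i] p0_lt_1[OF i] p1_pos[OF i] p1_lt_1[OF i]
    by (intro power_strict_decreasing; simp)+
  ultimately show ?thesis using stoch[OF i] by simp
qed

lemma split_prob_1: "i \<in> {0,1} \<Longrightarrow> 1 \<le> n \<Longrightarrow> split_prob i n 1 = real n * p i 0 * p i 1 ^ (n - 1)"
  using p1_eq by (simp add: split_prob_def binom_weight_def)

lemma split_prob_le_1: "i \<in> {0,1} \<Longrightarrow> k \<le> n \<Longrightarrow> split_prob i n k \<le> 1"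
  using member_le_sum[of k "{..n}" "split_prob i n"] split_prob_nonneg split_prob_sum[of i n] by auto

lemma pmf_split_prob: "i \<in> {0,1} \<Longrightarrow> pmf (binomial_pmf n (p i 0)) k = split_prob i n k"
  unfolding split_prob_def using p0_pos p0_lt_1 by (intro pmf_binomial_eq_binom_weight) (auto simp: less_imp_le)

lemma expectation_split_prob:
  "i \<in> {0,1} \<Longrightarrow> measure_pmf.expectation (binomial_pmf n (p i 0)) g = (\<Sum>k\<le>n. split_prob i n k * g k)"
  using p0_pos p0_lt_1 by (simp add: split_prob_def expectation_binomial_eq_binom_weight less_imp_le)

text \<open>The linear coefficient \<open>c\<close> of the mean \<open>E X\<^sub>n\<^sup>0 = n log n / H + c n\<close>; the mean of
  \<open>X\<^sub>n\<^sup>1\<close> has no linear term. The correction at \<open>k = 1\<close> accounts for \<open>X\<^sub>1\<^sup>0 = 0\<close> and is what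
  the last summand of \<open>\<eta>\<^sub>n\<^sup>i\<^sup>,\<^sup>1\<close> compensates.\<close>

definition mean_lin :: real where
  "mean_lin = entropy_gap / H"

definition mean_sol :: "nat \<Rightarrow> nat \<Rightarrow> real" where
  "mean_sol j k = xlogx (real k) / H
     + (if j = 0 then mean_lin * real k - (if k = 1 then mean_lin else 0) else 0)"

lemma mean_sol_small: "k \<le> 1 \<Longrightarrow> mean_sol j k = 0"
  by (cases k) (auto simp: mean_sol_def xlogx_def)

lemma mean_lin_balance:
  assumes i: "i \<in> {0,1}"
  shows "mean_lin * (real n * p i 0)
      + stat_pi p (1 - i) * (row_entropy p (1 - i) - row_entropy p i) / H * real n
     = (if i = 0 then mean_lin * real n else 0)"
proof -
  have "p 0 1 + p 1 0 > 0" using p1_pos[of 0] p0_pos[of 1] by simp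
  then have e: "stat_pi p 1 * (row_entropy p 1 - row_entropy p 0) / H = mean_lin * p 0 1"
    "stat_pi p 0 * (row_entropy p 1 - row_entropy p 0) / H = mean_lin * p 1 0"
    using H_pos by (simp_all add: mean_lin_def stat_pi_def field_simps)
  consider "i = 0" | "i = 1" using i by auto
  then show ?thesis
  proof cases
    case 1
    have "mean_lin * (real n * p 0 0) + mean_lin * p 0 1 * real n = mean_lin * real n * (p 0 0 + p 0 1)"
      by (simp add: algebra_simps)
    then show ?thesis using 1 e(1) stoch[of 0] by simp
  next
    case 2
    have "stat_pi p 0 * (row_entropy p 0 - row_entropy p 1) / H
        = - (stat_pi p 0 * (row_entropy p 1 - row_entropy p 0) / H)"
      by (simp add: algebra_simps diff_divide_distrib)
    then show ?thesis using 2 e(2) by (simp add: algebra_simps)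
  qed
qed

lemma mean_sol_rec:
  assumes i: "i \<in> {0,1}" and n: "2 \<le> n"
  shows "(\<Sum>k\<le>n. split_prob i n k * (mean_sol 0 k + mean_sol 1 (n - k) + eta1 p i n)) = mean_sol i n"
proof -
  define E where "E = (\<Sum>k\<le>n. split_prob i n k * (xlogx (real k) + xlogx (real n - real k)))"
  have eta: "eta1 p i n = (xlogx (real n) - E) / H
      + stat_pi p (1 - i) * (row_entropy p (1 - i) - row_entropy p i) / H * real n
      + mean_lin * split_prob i n 1"
    unfolding eta1_def expectation_split_prob[OF i] E_def using n split_prob_1[OF i, of n] H_pos
    by (simp add: mean_lin_def divide_simps)
  have "(\<Sum>k\<le>n. split_prob i n k * (mean_sol 0 k + mean_sol 1 (n - k)))
      = (\<Sum>k\<le>n. (split_prob i n k * (xlogx (real k) + xlogx (real n - real k))) / H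
          + mean_lin * (split_prob i n k * real k) - (if k = 1 then mean_lin * split_prob i n k else 0))"
    by (rule sum.cong) (auto simp: mean_sol_def of_nat_diff algebra_simps add_divide_distrib)
  also have "\<dots> = E / H + mean_lin * (real n * p i 0) - mean_lin * split_prob i n 1"
    using n by (simp add: sum.distrib sum_subtractf sum_divide_distrib[symmetric]
        sum_distrib_left[symmetric] E_def split_prob_mean)
  finally have s: "(\<Sum>k\<le>n. split_prob i n k * (mean_sol 0 k + mean_sol 1 (n - k)))
      = E / H + mean_lin * (real n * p i 0) - mean_lin * split_prob i n 1" .
  have "(\<Sum>k\<le>n. split_prob i n k * (mean_sol 0 k + mean_sol 1 (n - k) + eta1 p i n))
      = xlogx (real n) / H + mean_lin * (real n * p i 0)
        + stat_pi p (1 - i) * (row_entropy p (1 - i) - row_entropy p i) / H * real n"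
    unfolding split_prob_sum_add s eta using H_pos by (simp add: field_simps)
  also have "\<dots> = mean_sol i n"
    using mean_lin_balance[OF i, of n] n by (auto simp: mean_sol_def)
  finally show ?thesis .
qed

lemma mean_sol_unique:
  fixes m :: "nat \<Rightarrow> nat \<Rightarrow> real"
  assumes base: "\<And>j k. j \<in> {0,1} \<Longrightarrow> k \<le> 1 \<Longrightarrow> m j k = 0"
    and rec: "\<And>i n. i \<in> {0,1} \<Longrightarrow> 2 \<le> n \<Longrightarrow>
                m i n = (\<Sum>k\<le>n. split_prob i n k * (m 0 k + m 1 (n - k) + eta1 p i n))"
    and j: "j \<in> {0,1}"
  shows "m j n = mean_sol j n"
proof -
  define u where "u j k = m j k - mean_sol j k" for j k
  have rec_u: "\<bar>u i n - (\<Sum>k\<le>n. split_prob i n k * (u 0 k + u 1 (n - k)))\<bar> \<le> 0"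
    if i: "i \<in> {0,1}" and n: "2 \<le> n" for i n
  proof -
    have "u i n - (\<Sum>k\<le>n. split_prob i n k * (u 0 k + u 1 (n - k)))
        = (m i n - (\<Sum>k\<le>n. split_prob i n k * (m 0 k + m 1 (n - k))))
          - (mean_sol i n - (\<Sum>k\<le>n. split_prob i n k * (mean_sol 0 k + mean_sol 1 (n - k))))"
      unfolding u_def by (simp add: sum_subtractf algebra_simps)
    then show ?thesis
      using rec[OF i n] mean_sol_rec[OF i n] by (simp add: split_prob_sum_add)
  qed
  have "\<bar>u j n\<bar> \<le> 0"
    by (rule split_recursion_comparison[where u = u and \<phi> = "\<lambda>_. 0" and e = "\<lambda>_. 0" and N = 2])
      (use rec_u split_prob_nonneg split_prob_degenerate_lt base mean_sol_small j in \<open>auto simp: u_def\<close>)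
  then show ?thesis unfolding u_def by simp
qed

end

section \<open>The variance of the split mean\<close>

lemma xlogx_remainder_split_le:
  assumes a: "0 < a" and b: "0 < b" and y: "0 \<le> y" "y \<le> a + b"
  shows "xlogx_remainder a y + xlogx_remainder b (a + b - y) \<le> (y - a)^2 * (a + b) / (a * b)"
proof -
  have "xlogx_remainder a y + xlogx_remainder b (a + b - y) \<le> (y - a)^2 / a + (a + b - y - b)^2 / b"
    using a b y by (intro add_mono xlogx_remainder_bounds) auto
  also have "\<dots> = (y - a)^2 * (a + b) / (a * b)"
    using a b by (simp add: power2_eq_square field_simps)
  finally show ?thesis .
qed

context two_state_chain
begin

text \<open>Given \<open>I\<^sub>n\<^sup>i = k\<close>, the conditional mean of the right-hand side of the recursion is
  \<open>split_mean n k + \<eta>\<close>; its variance over \<open>k\<close> is the toll of the variance recursion.\<close>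

definition split_mean :: "nat \<Rightarrow> nat \<Rightarrow> real" where
  "split_mean n k = mean_sol 0 k + mean_sol 1 (n - k)"

definition split_var :: "nat \<Rightarrow> nat \<Rightarrow> real" where
  "split_var i n = (\<Sum>k\<le>n. split_prob i n k * (split_mean n k)^2)
                   - (\<Sum>k\<le>n. split_prob i n k * split_mean n k)^2"

text \<open>Linearising \<open>x log x\<close> at \<open>a = n p\<^sub>i\<^sub>0\<close> and \<open>b = n p\<^sub>i\<^sub>1\<close> writes \<open>split_mean n k\<close> as a
  constant plus \<open>split_slope i * (k - a)\<close> plus a remainder of order \<open>(k - a)\<^sup>2 / n\<close>.\<close>

definition split_slope :: "nat \<Rightarrow> real" where
  "split_slope i = (ln (p i 0) - ln (p i 1)) / H + mean_lin"

definition var_rate :: "nat \<Rightarrow> real" where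
  "var_rate i = (split_slope i)^2 * p i 0 * p i 1"

definition split_center :: "nat \<Rightarrow> nat \<Rightarrow> real" where
  "split_center i n = (xlogx (real n * p i 0) + xlogx (real n * p i 1)) / H + mean_lin * (real n * p i 0)"

definition split_rem :: "nat \<Rightarrow> nat \<Rightarrow> nat \<Rightarrow> real" where
  "split_rem i n k = (xlogx_remainder (real n * p i 0) (real k)
      + xlogx_remainder (real n * p i 1) (real n - real k)) / H - (if k = 1 then mean_lin else 0)"

definition split_rem_bound :: "nat \<Rightarrow> real" where
  "split_rem_bound i = 8 / (p i 0 * p i 1 * H)^2 + 2 * mean_lin^2"

lemma split_rem_bound_nonneg: "0 \<le> split_rem_bound i"
  unfolding split_rem_bound_def by simp

lemma split_mean_decomp:
  assumes i: "i \<in> {0,1}" and n: "1 \<le> n" and k: "k \<le> n"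
  shows "split_mean n k
      = split_center i n + split_slope i * (real k - real n * p i 0) + split_rem i n k"
proof -
  define q where "q = p i 0"
  define r where "r = p i 1"
  define a where "a = real n * q"
  define b where "b = real n * r"
  have q: "0 < q" and r: "0 < r" and rq: "r = 1 - q"
    using p0_pos[OF i] p1_pos[OF i] p1_eq[OF i] by (auto simp: q_def r_def)
  have lnab: "ln a - ln b = ln q - ln r" using q r n by (simp add: a_def b_def ln_mult)
  have ab: "real n - a = b" unfolding a_def b_def rq by (simp add: algebra_simps)
  have "split_mean n k = xlogx (real k) / H + mean_lin * real k
      - (if k = 1 then mean_lin else 0) + xlogx (real n - real k) / H"
    using k by (simp add: split_mean_def mean_sol_def of_nat_diff)
  also have "\<dots> = split_center i n + split_slope i * (real k - a) + split_rem i n k"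
    unfolding split_center_def split_rem_def split_slope_def xlogx_remainder_def
      q_def[symmetric] r_def[symmetric] a_def[symmetric] b_def[symmetric] lnab[symmetric]
    using H_pos ab by (simp add: field_simps)
  finally show ?thesis unfolding a_def q_def .
qed

lemma split_slope_centered:
  "(\<Sum>k\<le>n. split_prob i n k * (split_slope i * (real k - real n * p i 0))) = 0"
proof -
  have "(\<Sum>k\<le>n. split_prob i n k * (split_slope i * (real k - real n * p i 0)))
      = split_slope i * ((\<Sum>k\<le>n. split_prob i n k * real k) - real n * p i 0 * (\<Sum>k\<le>n. split_prob i n k))"
    by (simp add: sum_distrib_left sum_subtractf algebra_simps)
  then show ?thesis using split_prob_sum split_prob_mean by simp
qed

lemma split_slope_variance:
  assumes i: "i \<in> {0,1}"
  shows "(\<Sum>k\<le>n. split_prob i n k * (split_slope i * (real k - real n * p i 0))^2) = var_rate i * real n"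
proof -
  have "(\<Sum>k\<le>n. split_prob i n k * (split_slope i * (real k - real n * p i 0))^2)
      = (split_slope i)^2 * (\<Sum>k\<le>n. split_prob i n k * (real k - real n * p i 0)^2)"
    by (simp add: sum_distrib_left power_mult_distrib mult_ac)
  then show ?thesis
    using p1_eq[OF i] by (simp add: split_prob_def binom_weight_variance var_rate_def)
qed

lemma split_rem_sq_le:
  assumes i: "i \<in> {0,1}" and n: "1 \<le> n" and k: "k \<le> n"
  shows "(split_rem i n k)^2
      \<le> 2 * ((real k - real n * p i 0)^4 / (real n * p i 0 * p i 1 * H)^2)
        + 2 * (if k = 1 then mean_lin^2 else 0)"
proof -
  define a where "a = real n * p i 0"
  define b where "b = real n * p i 1"
  define z where "z = real n * p i 0 * p i 1 * H"
  have a: "0 < a" and b: "0 < b" and z: "0 < z" and ab: "a + b = real n"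
    using p0_pos[OF i] p1_pos[OF i] stoch[OF i] n H_pos
    by (auto simp: a_def b_def z_def algebra_simps simp flip: distrib_left)
  define x where "x = (xlogx_remainder a (real k) + xlogx_remainder b (real n - real k)) / H"
  have "0 \<le> x"
    unfolding x_def using a b k H_pos by (intro divide_nonneg_pos add_nonneg_nonneg xlogx_remainder_bounds) auto
  moreover have "x \<le> (real k - a)^2 / z"
  proof -
    have "xlogx_remainder a (real k) + xlogx_remainder b (real n - real k)
        \<le> (real k - a)^2 * (a + b) / (a * b)"
      using xlogx_remainder_split_le[OF a b, of "real k"] k ab by simp
    then have "x \<le> (real k - a)^2 * (a + b) / (a * b) / H"
      unfolding x_def using H_pos by (intro divide_right_mono) auto
    also have "\<dots> = (real k - a)^2 / z"
      using n p0_pos[OF i] p1_pos[OF i] H_pos unfolding ab unfolding a_def b_def z_def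
      by (simp add: field_simps power2_eq_square)
    finally show ?thesis .
  qed
  ultimately have x2: "x^2 \<le> ((real k - a)^2 / z)^2" by (intro power_mono) auto
  have "(split_rem i n k)^2 = (x - (if k = 1 then mean_lin else 0))^2"
    unfolding split_rem_def x_def a_def b_def ..
  also have "\<dots> \<le> 2 * x^2 + 2 * (if k = 1 then mean_lin else 0)^2"
    using sum_squares_ge_zero[of "x + (if k = 1 then mean_lin else 0)" 0]
    by (simp add: power2_eq_square algebra_simps)
  also have "(if k = 1 then mean_lin else 0)^2 = (if k = 1 then mean_lin^2 else 0)"
    by simp
  also have "2 * x^2 + 2 * (if k = 1 then mean_lin^2 else 0)
      \<le> 2 * ((real k - a)^4 / z^2) + 2 * (if k = 1 then mean_lin^2 else 0)"
    using x2 by (simp add: power_divide flip: power_mult)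
  finally show ?thesis unfolding a_def z_def .
qed

lemma split_rem_second_moment:
  assumes i: "i \<in> {0,1}" and n: "1 \<le> n"
  shows "(\<Sum>k\<le>n. split_prob i n k * (split_rem i n k)^2) \<le> split_rem_bound i"
proof -
  define z where "z = real n * p i 0 * p i 1 * H"
  have z: "0 < z" using p0_pos[OF i] p1_pos[OF i] n H_pos by (simp add: z_def)
  have "(\<Sum>k\<le>n. split_prob i n k * (split_rem i n k)^2)
      \<le> (\<Sum>k\<le>n. split_prob i n k * (2 * ((real k - real n * p i 0)^4 / z^2)
            + 2 * (if k = 1 then mean_lin^2 else 0)))"
    unfolding z_def using split_rem_sq_le[OF i n] split_prob_nonneg[OF i]
    by (intro sum_mono mult_left_mono) auto
  also have "\<dots> = (\<Sum>k\<le>n. 2 / z^2 * (split_prob i n k * (real k - real n * p i 0)^4)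
      + (if k = 1 then 2 * mean_lin^2 * split_prob i n k else 0))"
    by (rule sum.cong) (simp_all add: algebra_simps)
  also have "\<dots> = 2 / z^2 * (\<Sum>k\<le>n. split_prob i n k * (real k - real n * p i 0)^4)
      + 2 * mean_lin^2 * split_prob i n 1"
    using n by (simp add: sum.distrib sum_distrib_left)
  also have "\<dots> \<le> 2 / z^2 * (4 * (real n)^2) + 2 * mean_lin^2 * 1"
  proof (intro add_mono mult_left_mono)
    show "(\<Sum>k\<le>n. split_prob i n k * (real k - real n * p i 0)^4) \<le> 4 * (real n)^2"
      unfolding split_prob_def using p0_pos[OF i] p0_lt_1[OF i]
      by (intro binom_weight_central_moment4_le) auto
    show "split_prob i n 1 \<le> 1" using split_prob_le_1[OF i] n .
  qed auto
  also have "\<dots> = split_rem_bound i"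
    using z n unfolding z_def split_rem_bound_def by (simp add: field_simps power2_eq_square)
  finally show ?thesis .
qed

text \<open>The perturbation bound is applied with relative error \<open>t = 1/\<surd>n\<close>.\<close>

lemma split_var_approx:
  assumes i: "i \<in> {0,1}" and n: "1 \<le> n"
  shows "\<bar>split_var i n - var_rate i * real n\<bar> \<le> (var_rate i + 2 * split_rem_bound i) * sqrt (real n)"
proof -
  have sq: "0 < sqrt (real n)" "1 \<le> sqrt (real n)" using n by auto
  have "\<bar>split_var i n - var_rate i * real n\<bar>
      \<le> (1 / sqrt (real n)) * (var_rate i * real n)
        + (1 + 1 / (1 / sqrt (real n))) * (\<Sum>k\<le>n. split_prob i n k * (split_rem i n k)^2)"
    unfolding split_var_def split_slope_variance[OF i, symmetric]
    by (rule weighted_variance_perturbation[where c = "split_center i n"])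
      (use split_prob_sum split_prob_nonneg[OF i] split_mean_decomp[OF i n] split_slope_centered sq
        in auto)
  also have "\<dots> \<le> var_rate i * sqrt (real n) + (1 + sqrt (real n)) * split_rem_bound i"
  proof (rule add_mono)
    have "(1 / sqrt (real n)) * (var_rate i * real n) = var_rate i * (real n / sqrt (real n))"
      by simp
    also have "\<dots> = var_rate i * sqrt (real n)" by (simp add: real_div_sqrt)
    finally show "(1 / sqrt (real n)) * (var_rate i * real n) \<le> var_rate i * sqrt (real n)"
      by simp
    show "(1 + 1 / (1 / sqrt (real n))) * (\<Sum>k\<le>n. split_prob i n k * (split_rem i n k)^2)
        \<le> (1 + sqrt (real n)) * split_rem_bound i"
      using sq split_rem_second_moment[OF i n] by (simp add: mult_left_mono)
  qed
  also have "\<dots> \<le> (var_rate i + 2 * split_rem_bound i) * sqrt (real n)"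
    using sq mult_left_mono[OF sq(2) split_rem_bound_nonneg] by (simp add: algebra_simps)
  finally show ?thesis .
qed

section \<open>The variance\<close>

lemma sigma2_nonneg: "0 \<le> sigma2 p"
  unfolding sigma2_def
  using stat_pi_pos[of 0] stat_pi_pos[of 1] p0_pos[of 0] p1_pos[of 0] p0_pos[of 1] p1_pos[of 1] H_pos
  by (intro add_nonneg_nonneg mult_nonneg_nonneg divide_nonneg_pos) auto

lemma var_rate_nonneg: "i \<in> {0,1} \<Longrightarrow> 0 \<le> var_rate i"
  unfolding var_rate_def using p0_pos p1_pos by (simp add: less_imp_le)

lemma split_slope_eq:
  assumes i: "i \<in> {0,1}"
  shows "split_slope i = (ln (p i 0 / p i 1) + entropy_gap) / H"
  unfolding split_slope_def mean_lin_def using p0_pos[OF i] p1_pos[OF i] H_pos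
  by (simp add: ln_div add_divide_distrib)

text \<open>This identity is where the formula for \<open>\<sigma>\<^sup>2\<close> comes from.\<close>

lemma var_rate_average: "stat_pi p 0 * var_rate 0 + stat_pi p 1 * var_rate 1 = sigma2 p * H"
proof -
  have rate: "var_rate i = p i 0 * p i 1 / H^2 * (ln (p i 0 / p i 1) + entropy_gap)^2"
    if "i \<in> {0,1}" for i
    unfolding var_rate_def split_slope_eq[OF that] by (simp add: power_divide)
  have r0: "var_rate 0 = p 0 0 * p 0 1 / H^2 * (ln (p 0 0 / p 0 1) + entropy_gap)^2"
    and r1: "var_rate 1 = p 1 0 * p 1 1 / H^2 * (ln (p 1 0 / p 1 1) + entropy_gap)^2"
    by (rule rate; simp)+
  show ?thesis
    unfolding r0 r1 sigma2_def using H_pos by (simp add: field_simps power2_eq_square power3_eq_cube)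
qed

lemma xlogx_split_eq_entropy:
  assumes i: "i \<in> {0,1}" and n: "0 < n"
  shows "xlogx (real n) - (xlogx (real n * p i 0) + xlogx (real n * p i 1)) = real n * row_entropy p i"
proof -
  have q: "0 < p i 0" and r: "0 < p i 1" and qr: "p i 0 + p i 1 = 1"
    using p0_pos[OF i] p1_pos[OF i] stoch[OF i] by auto
  have "xlogx (real n) - (xlogx (real n * p i 0) + xlogx (real n * p i 1))
      = real n * ln (real n) * (1 - (p i 0 + p i 1)) - real n * (p i 0 * ln (p i 0) + p i 1 * ln (p i 1))"
    using n q r by (simp add: xlogx_eq ln_mult algebra_simps)
  also have "\<dots> = real n * row_entropy p i"
    using q r unfolding qr by (simp add: row_entropy_def xlogx_eq algebra_simps)
  finally show ?thesis .
qed

text \<open>The ansatz \<open>\<sigma>\<^sup>2 n log n + d\<^sub>j n\<close> for the centred second moments; the linear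
  coefficients \<open>d\<^sub>j\<close> absorb the difference between \<open>var_rate i\<close> and its stationary
  average.\<close>

definition var_lin :: "nat \<Rightarrow> real" where
  "var_lin j = (if j = 0 then (var_rate 0 - sigma2 p * row_entropy p 0) / p 0 1 else 0)"

definition var_ansatz :: "nat \<Rightarrow> nat \<Rightarrow> real" where
  "var_ansatz j k = sigma2 p * xlogx (real k) + var_lin j * real k"

lemma var_lin_balance:
  assumes i: "i \<in> {0,1}"
  shows "var_lin i - var_lin 0 * p i 0 - var_lin 1 * p i 1 = var_rate i - sigma2 p * row_entropy p i"
proof (cases "i = 0")
  case True
  have "var_lin 0 * (p 0 0 + p 0 1) = var_lin 0" using stoch[of 0] by simp
  then have "var_lin 0 - var_lin 0 * p 0 0 = var_lin 0 * p 0 1" by (simp add: algebra_simps)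
  then show ?thesis using True p1_pos[of 0] by (simp add: var_lin_def)
next
  case False
  then have i1: "i = 1" using i by simp
  define s where "s = p 0 1 + p 1 0"
  have s: "0 < s" using p1_pos[of 0] p0_pos[of 1] by (simp add: s_def)
  have e: "s * (stat_pi p 0 * x + stat_pi p 1 * y) = p 1 0 * x + p 0 1 * y" for x y
    using s unfolding stat_pi_def s_def[symmetric] by (simp add: field_simps)
  have "p 1 0 * var_rate 0 + p 0 1 * var_rate 1
      = s * (sigma2 p * (stat_pi p 0 * row_entropy p 0 + stat_pi p 1 * row_entropy p 1))"
    using var_rate_average e[of "var_rate 0" "var_rate 1"] unfolding entropy_H_def by simp
  also have "\<dots> = sigma2 p * (s * (stat_pi p 0 * row_entropy p 0 + stat_pi p 1 * row_entropy p 1))"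
    by (rule mult.left_commute)
  also have "\<dots> = sigma2 p * (p 1 0 * row_entropy p 0 + p 0 1 * row_entropy p 1)"
    unfolding e ..
  finally have "- ((var_rate 0 - sigma2 p * row_entropy p 0) / p 0 1 * p 1 0)
      = var_rate 1 - sigma2 p * row_entropy p 1"
    using p1_pos[of 0] by (simp add: field_simps)
  then show ?thesis using i1 by (simp add: var_lin_def)
qed

lemma var_ansatz_defect:
  assumes i: "i \<in> {0,1}" and n: "1 \<le> n"
  shows "\<bar>var_ansatz i n - (\<Sum>k\<le>n. split_prob i n k * (var_ansatz 0 k + var_ansatz 1 (n - k)))
          - var_rate i * real n\<bar> \<le> sigma2 p"
proof -
  define E where "E = (\<Sum>k\<le>n. split_prob i n k * (xlogx (real k) + xlogx (real n - real k)))"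
  define \<rho> where "\<rho> = E - (xlogx (real n * p i 0) + xlogx (real n * p i 1))"
  have "0 \<le> \<rho>" "\<rho> \<le> 1"
    using binom_weight_xlogx_split_bounds[of "p i 0" n] p0_pos[OF i] p0_lt_1[OF i] p1_eq[OF i] n
    unfolding \<rho>_def E_def split_prob_def by auto
  have "(\<Sum>k\<le>n. split_prob i n k * (var_ansatz 0 k + var_ansatz 1 (n - k)))
      = (\<Sum>k\<le>n. sigma2 p * (split_prob i n k * (xlogx (real k) + xlogx (real n - real k)))
          + var_lin 0 * (split_prob i n k * real k) + var_lin 1 * (split_prob i n k * (real n - real k)))"
    by (rule sum.cong) (auto simp: var_ansatz_def of_nat_diff algebra_simps)
  also have "\<dots> = sigma2 p * E + var_lin 0 * (real n * p i 0) + var_lin 1 * (real n * p i 1)"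
    using p1_eq[OF i] unfolding E_def split_prob_def
    by (simp add: sum.distrib binom_weight_mean binom_weight_compl_mean flip: sum_distrib_left)
  finally have "var_ansatz i n - (\<Sum>k\<le>n. split_prob i n k * (var_ansatz 0 k + var_ansatz 1 (n - k)))
      = sigma2 p * (xlogx (real n) - E) + real n * (var_lin i - var_lin 0 * p i 0 - var_lin 1 * p i 1)"
    unfolding var_ansatz_def by (simp add: algebra_simps)
  also have "\<dots> = var_rate i * real n - sigma2 p * \<rho>"
    unfolding var_lin_balance[OF i] \<rho>_def using xlogx_split_eq_entropy[OF i] n
    by (simp add: algebra_simps)
  finally show ?thesis
    using \<open>0 \<le> \<rho>\<close> \<open>\<rho> \<le> 1\<close> sigma2_nonneg mult_left_mono[of \<rho> 1 "sigma2 p"] by simp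
qed

lemma centered_moment_rec:
  fixes s :: "nat \<Rightarrow> nat \<Rightarrow> real"
  assumes i: "i \<in> {0,1}" and n: "2 \<le> n"
    and rec: "s i n = (\<Sum>k\<le>n. split_prob i n k * (s 0 k + s 1 (n - k) + (eta1 p i n)^2
                + 2 * (mean_sol 0 k * mean_sol 1 (n - k)) + 2 * eta1 p i n * (mean_sol 0 k + mean_sol 1 (n - k))))"
  shows "(s i n - (mean_sol i n)^2)
         - (\<Sum>k\<le>n. split_prob i n k * ((s 0 k - (mean_sol 0 k)^2) + (s 1 (n - k) - (mean_sol 1 (n - k))^2)))
       = split_var i n"
proof -
  define \<eta> where "\<eta> = eta1 p i n"
  have "s i n - (\<Sum>k\<le>n. split_prob i n k * ((s 0 k - (mean_sol 0 k)^2) + (s 1 (n - k) - (mean_sol 1 (n - k))^2)))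
      = (\<Sum>k\<le>n. split_prob i n k * (split_mean n k + \<eta>)^2)"
    unfolding rec \<eta>_def[symmetric] sum_subtractf[symmetric]
    by (rule sum.cong) (simp_all add: split_mean_def power2_eq_square algebra_simps)
  moreover have "mean_sol i n = (\<Sum>k\<le>n. split_prob i n k * (split_mean n k + \<eta>))"
    using mean_sol_rec[OF i n] unfolding split_mean_def \<eta>_def by simp
  ultimately show ?thesis
    using weighted_variance_shift[OF split_prob_sum[of i n], where g = "split_mean n" and c = \<eta>]
    unfolding split_var_def by simp
qed

text \<open>Profiles \<open>A k - B \<surd>k\<close> are supersolutions for tolls of order \<open>\<surd>n\<close>, by the gain
  \<open>\<surd>p\<^sub>i\<^sub>0 + \<surd>p\<^sub>i\<^sub>1 > 1\<close> in the split.\<close>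

definition sqrt_gain :: "nat \<Rightarrow> real" where
  "sqrt_gain i = sqrt (p i 0) + sqrt (1 - p i 0) - 1"

definition sqrt_loss :: "nat \<Rightarrow> real" where
  "sqrt_loss i = (1 - p i 0) / (2 * sqrt (p i 0)) + p i 0 / (2 * sqrt (1 - p i 0))"

lemma sqrt_gain_pos: "i \<in> {0,1} \<Longrightarrow> 0 < sqrt_gain i"
  unfolding sqrt_gain_def using sqrt_sum_compl_gt_1[of "p i 0"] p0_pos p0_lt_1 by auto

lemma sqrt_loss_nonneg:
  assumes i: "i \<in> {0,1}"
  shows "0 \<le> sqrt_loss i"
  unfolding sqrt_loss_def using p0_pos[OF i] p0_lt_1[OF i]
  by (auto intro!: add_nonneg_nonneg divide_nonneg_pos)

lemma split_prob_sqrt_lower: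
  assumes i: "i \<in> {0,1}" and n: "1 \<le> n"
  shows "sqrt (real n) * (1 + sqrt_gain i) - sqrt_loss i
      \<le> (\<Sum>k\<le>n. split_prob i n k * (sqrt (real k) + sqrt (real n - real k)))"
proof -
  define q where "q = p i 0"
  have q: "0 < q" "q < 1" using p0_pos[OF i] p0_lt_1[OF i] by (auto simp: q_def)
  have "(1 - q) / (2 * sqrt (real n * q)) \<le> (1 - q) / (2 * sqrt q)"
    "q / (2 * sqrt (real n * (1 - q))) \<le> q / (2 * sqrt (1 - q))"
    using q n by (intro divide_left_mono mult_left_mono real_sqrt_le_mono; simp add: real_sqrt_mult)+
  then show ?thesis
    using binom_weight_sqrt_split_lower[OF q, of n] n
    unfolding split_prob_def sqrt_gain_def sqrt_loss_def q_def[symmetric] by (simp add: algebra_simps)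
qed

lemma sqrt_profile_supersolution:
  assumes i: "i \<in> {0,1}" and n: "1 \<le> n" and C: "0 \<le> C"
    and B: "2 * C \<le> B * sqrt_gain i" and large: "2 * sqrt_loss i \<le> sqrt_gain i * sqrt (real n)"
  shows "(\<Sum>k\<le>n. split_prob i n k * ((A * real k - B * sqrt (real k))
            + (A * real (n - k) - B * sqrt (real (n - k))))) + C * sqrt (real n)
      \<le> A * real n - B * sqrt (real n)"
proof -
  have "0 \<le> B * sqrt_gain i" using B C by linarith
  then have B0: "0 \<le> B" using sqrt_gain_pos[OF i] by (auto simp: zero_le_mult_iff)
  have "(\<Sum>k\<le>n. split_prob i n k * ((A * real k - B * sqrt (real k))
            + (A * real (n - k) - B * sqrt (real (n - k)))))
      = (\<Sum>k\<le>n. A * real n * split_prob i n k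
            - B * (split_prob i n k * (sqrt (real k) + sqrt (real n - real k))))"
    by (rule sum.cong) (auto simp: of_nat_diff algebra_simps)
  also have "\<dots> = A * real n - B * (\<Sum>k\<le>n. split_prob i n k * (sqrt (real k) + sqrt (real n - real k)))"
    by (simp add: sum_subtractf sum_distrib_left split_prob_sum flip: sum_distrib_left)
  also have "\<dots> \<le> A * real n - B * (sqrt (real n) * (1 + sqrt_gain i) - sqrt_loss i)"
    using split_prob_sqrt_lower[OF i n] B0 by (simp add: mult_left_mono)
  finally have "(\<Sum>k\<le>n. split_prob i n k * ((A * real k - B * sqrt (real k))
            + (A * real (n - k) - B * sqrt (real (n - k))))) + C * sqrt (real n)
      \<le> A * real n - B * sqrt (real n) - (B * sqrt_gain i * sqrt (real n) - B * sqrt_loss i - C * sqrt (real n))"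
    by (simp add: algebra_simps)
  moreover have "2 * (B * sqrt_loss i) \<le> B * sqrt_gain i * sqrt (real n)"
    using mult_left_mono[OF large B0] by (simp add: algebra_simps)
  moreover have "2 * C * sqrt (real n) \<le> B * sqrt_gain i * sqrt (real n)"
    using mult_right_mono[OF B, of "sqrt (real n)"] by simp
  ultimately show ?thesis by linarith
qed

lemma var_ansatz_error_defect:
  fixes v :: "nat \<Rightarrow> nat \<Rightarrow> real"
  assumes i: "i \<in> {0,1}" and n: "1 \<le> n"
    and rec: "v i n - (\<Sum>k\<le>n. split_prob i n k * (v 0 k + v 1 (n - k))) = split_var i n"
  defines "u \<equiv> \<lambda>j k. v j k - var_ansatz j k"
  shows "\<bar>u i n - (\<Sum>k\<le>n. split_prob i n k * (u 0 k + u 1 (n - k)))\<bar>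
      \<le> (var_rate i + 2 * split_rem_bound i + sigma2 p) * sqrt (real n)"
proof -
  have "u i n - (\<Sum>k\<le>n. split_prob i n k * (u 0 k + u 1 (n - k)))
      = (split_var i n - var_rate i * real n)
        - (var_ansatz i n - (\<Sum>k\<le>n. split_prob i n k * (var_ansatz 0 k + var_ansatz 1 (n - k)))
           - var_rate i * real n)"
    unfolding u_def rec[symmetric] by (simp add: sum_subtractf algebra_simps)
  moreover have "sigma2 p \<le> sigma2 p * sqrt (real n)"
    using sigma2_nonneg n mult_left_mono[of 1 "sqrt (real n)" "sigma2 p"] by simp
  ultimately show ?thesis
    using split_var_approx[OF i n] var_ansatz_defect[OF i n] by (simp add: algebra_simps abs_le_iff)
qed

lemma split_recursion_sqrt_toll:
  fixes u :: "nat \<Rightarrow> nat \<Rightarrow> real"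
  assumes C0: "0 \<le> C" and base: "\<And>j. j \<in> {0,1} \<Longrightarrow> u j 0 = 0"
    and rec: "\<And>i n. i \<in> {0,1} \<Longrightarrow> 2 \<le> n \<Longrightarrow>
                \<bar>u i n - (\<Sum>k\<le>n. split_prob i n k * (u 0 k + u 1 (n - k)))\<bar> \<le> C * sqrt (real n)"
  shows "\<exists>A. \<forall>j\<in>{0,1}. \<forall>n. \<bar>u j n\<bar> \<le> A * real n"
proof -
  define G where "G = min (sqrt_gain 0) (sqrt_gain 1)"
  define L where "L = max (sqrt_loss 0) (sqrt_loss 1)"
  define B where "B = 2 * C / G"
  define N where "N = max 2 (nat \<lceil>(2 * L / G)^2\<rceil>)"
  define K where "K = (\<Sum>k<N. \<bar>u 0 k\<bar> + \<bar>u 1 k\<bar>)"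
  define \<phi> where "\<phi> k = (B + K) * real k - B * sqrt (real k)" for k
  have G: "0 < G" "\<And>i. i \<in> {0,1} \<Longrightarrow> G \<le> sqrt_gain i"
    unfolding G_def using sqrt_gain_pos[of 0] sqrt_gain_pos[of 1] by auto
  have L: "0 \<le> L" "\<And>i. i \<in> {0,1} \<Longrightarrow> sqrt_loss i \<le> L"
    unfolding L_def using sqrt_loss_nonneg[of 0] by auto
  have B0: "0 \<le> B" unfolding B_def using C0 G(1) by simp
  have B: "2 * C \<le> B * sqrt_gain i" if "i \<in> {0,1}" for i
    using mult_left_mono[OF G(2)[OF that] B0] G(1) unfolding B_def by simp
  have K: "0 \<le> K" unfolding K_def by (intro sum_nonneg) auto
  have N: "2 \<le> N" "(2 * L / G)^2 \<le> real N" unfolding N_def by linarith+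
  have super: "(\<Sum>k\<le>n. split_prob i n k * (\<phi> k + \<phi> (n - k))) + C * sqrt (real n) \<le> \<phi> n"
    if i: "i \<in> {0,1}" and n: "N \<le> n" for i n
  proof -
    have "sqrt ((2 * L / G)^2) \<le> sqrt (real n)"
      using N(2) n by (intro real_sqrt_le_mono) simp
    then have "2 * L / G \<le> sqrt (real n)" using L(1) G(1) by simp
    then have "G * (2 * L / G) \<le> sqrt_gain i * sqrt (real n)"
      by (rule mult_mono[OF G(2)[OF i]]) (use sqrt_gain_pos[OF i] G(1) L(1) in simp_all)
    then have large: "2 * sqrt_loss i \<le> sqrt_gain i * sqrt (real n)"
      using L(2)[OF i] G(1) by simp
    have n1: "1 \<le> n" using n N(1) by simp
    show ?thesis
      unfolding \<phi>_def by (rule sqrt_profile_supersolution[OF i n1 C0 B[OF i] large])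
  qed
  have initial: "\<bar>u i k\<bar> \<le> \<phi> k" if i: "i \<in> {0,1}" and k: "k < N" for i k
  proof (cases k)
    case 0
    then show ?thesis using base[OF i] by (simp add: \<phi>_def)
  next
    case (Suc m)
    have "\<bar>u i k\<bar> \<le> K"
      using i k member_le_sum[of k "{..<N}" "\<lambda>k. \<bar>u 0 k\<bar> + \<bar>u 1 k\<bar>"] unfolding K_def by auto
    also have "\<dots> \<le> K * real k" using K Suc mult_left_mono[of 1 "real k" K] by simp
    also have "\<dots> \<le> \<phi> k"
    proof -
      have "real k \<le> (real k)^2"
        using le_square[of k] unfolding power2_eq_square by (metis of_nat_le_iff of_nat_mult)
      then have "sqrt (real k) \<le> real k" by (intro real_le_lsqrt) auto
      then show ?thesis
        using mult_left_mono[of "sqrt (real k)" "real k" B] B0 unfolding \<phi>_def by (simp add: algebra_simps)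
    qed
    finally show ?thesis .
  qed
  have rec': "\<bar>u i n - (\<Sum>k\<le>n. split_prob i n k * (u 0 k + u 1 (n - k)))\<bar> \<le> C * sqrt (real n)"
    if "i \<in> {0,1}" "N \<le> n" for i n
    using rec[of i n] that N(1) by simp
  have bound: "\<bar>u j n\<bar> \<le> \<phi> n" if "j \<in> {0,1}" for j n
    using split_recursion_comparison[where e = "\<lambda>n. C * sqrt (real n)", OF N(1) split_prob_nonneg
        split_prob_degenerate_lt rec' super initial that] .
  have "\<bar>u j n\<bar> \<le> (B + K) * real n" if "j \<in> {0,1}" for j n
    using bound[OF that, of n] mult_nonneg_nonneg[OF B0 real_sqrt_ge_zero[of "real n"]]
    unfolding \<phi>_def by linarith
  then show ?thesis by blast
qed

lemma centered_moment_asymp: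
  fixes v :: "nat \<Rightarrow> nat \<Rightarrow> real"
  assumes base: "\<And>j k. j \<in> {0,1} \<Longrightarrow> k \<le> 1 \<Longrightarrow> v j k = 0"
    and rec: "\<And>i n. i \<in> {0,1} \<Longrightarrow> 2 \<le> n \<Longrightarrow>
                v i n - (\<Sum>k\<le>n. split_prob i n k * (v 0 k + v 1 (n - k))) = split_var i n"
  shows "\<exists>A. \<forall>j\<in>{0,1}. \<forall>n. \<bar>v j n - sigma2 p * real n * ln (real n)\<bar> \<le> A * real n"
proof -
  define u where "u j k = v j k - var_ansatz j k" for j k
  define C where "C = max (var_rate 0 + 2 * split_rem_bound 0) (var_rate 1 + 2 * split_rem_bound 1) + sigma2 p"
  have C: "\<And>i. i \<in> {0,1} \<Longrightarrow> var_rate i + 2 * split_rem_bound i + sigma2 p \<le> C"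
    unfolding C_def by auto
  have "0 \<le> var_rate 0 + 2 * split_rem_bound 0 + sigma2 p"
    using var_rate_nonneg[of 0] split_rem_bound_nonneg[of 0] sigma2_nonneg by simp
  then have C0: "0 \<le> C" using C[of 0] by simp
  have defect: "\<bar>u i n - (\<Sum>k\<le>n. split_prob i n k * (u 0 k + u 1 (n - k)))\<bar> \<le> C * sqrt (real n)"
    if i: "i \<in> {0,1}" and n: "2 \<le> n" for i n
  proof -
    have "\<bar>u i n - (\<Sum>k\<le>n. split_prob i n k * (u 0 k + u 1 (n - k)))\<bar>
        \<le> (var_rate i + 2 * split_rem_bound i + sigma2 p) * sqrt (real n)"
      unfolding u_def by (rule var_ansatz_error_defect[OF i _ rec[OF i n]]) (use n in simp)
    also have "\<dots> \<le> C * sqrt (real n)"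
      using C[OF i] by (intro mult_right_mono) auto
    finally show ?thesis .
  qed
  have "u j 0 = 0" if "j \<in> {0,1}" for j
    using base[OF that] by (simp add: u_def var_ansatz_def xlogx_def)
  then obtain A where A: "\<And>j n. j \<in> {0,1} \<Longrightarrow> \<bar>u j n\<bar> \<le> A * real n"
    using split_recursion_sqrt_toll[OF C0 _ defect] by blast
  have "\<bar>v j n - sigma2 p * real n * ln (real n)\<bar> \<le> (A + \<bar>var_lin 0\<bar> + \<bar>var_lin 1\<bar>) * real n"
    if j: "j \<in> {0,1}" for j n
  proof -
    have "v j n - sigma2 p * real n * ln (real n) = u j n + var_lin j * real n"
      by (cases "n = 0") (auto simp: u_def var_ansatz_def xlogx_def)
    moreover have "\<bar>var_lin j * real n\<bar> \<le> (\<bar>var_lin 0\<bar> + \<bar>var_lin 1\<bar>) * real n"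
      using j by (auto simp: abs_mult intro!: mult_right_mono)
    ultimately show ?thesis using A[OF j, of n] by (simp add: algebra_simps)
  qed
  then show ?thesis by blast
qed

end

section \<open>Finite mixtures and independent sums\<close>

lemma finite_mixture_eq_bind:
  fixes \<mu> :: "'b measure" and Q :: "nat \<Rightarrow> 'b measure" and Pm :: "nat pmf" and Bm :: "'b measure"
  assumes sP: "set_pmf Pm = {..n}"
    and Qp: "\<And>k. prob_space (Q k)" and Qs: "\<And>k. sets (Q k) = sets Bm"
    and s\<mu>: "sets \<mu> = sets Bm" and fin: "finite_measure \<mu>"
    and eq: "\<And>A. A \<in> sets Bm \<Longrightarrow> measure \<mu> A = (\<Sum>k\<le>n. pmf Pm k * measure (Q k) A)"
  shows "\<mu> = measure_pmf Pm \<bind> Q"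
proof (rule measure_eqI)
  have Qm: "Q \<in> measurable (measure_pmf Pm) (subprob_algebra Bm)"
    using Qp Qs by (simp add: space_subprob_algebra prob_space_imp_subprob_space)
  show "sets \<mu> = sets (measure_pmf Pm \<bind> Q)"
    using s\<mu> by (subst sets_bind) (use Qs in auto)
  fix A assume "A \<in> sets \<mu>"
  then have A: "A \<in> sets Bm" using s\<mu> by simp
  have "emeasure (measure_pmf Pm \<bind> Q) A = (\<integral>\<^sup>+k. emeasure (Q k) A \<partial>measure_pmf Pm)"
    by (rule emeasure_bind[OF _ Qm A]) simp
  also have "\<dots> = (\<Sum>k\<in>set_pmf Pm. emeasure (Q k) A * pmf Pm k)"
    by (rule nn_integral_measure_pmf_finite) (auto simp: sP)
  also have "\<dots> = (\<Sum>k\<le>n. ennreal (pmf Pm k * measure (Q k) A))"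
  proof (unfold sP, rule sum.cong[OF refl])
    fix k
    interpret prob_space "Q k" by (rule Qp)
    show "emeasure (Q k) A * ennreal (pmf Pm k) = ennreal (pmf Pm k * measure (Q k) A)"
      by (simp add: emeasure_eq_measure ennreal_mult mult.commute)
  qed
  also have "\<dots> = ennreal (\<Sum>k\<le>n. pmf Pm k * measure (Q k) A)" by (rule sum_ennreal) simp
  also have "\<dots> = emeasure \<mu> A"
    using eq[OF A] fin by (simp add: finite_measure.emeasure_eq_measure)
  finally show "emeasure \<mu> A = emeasure (measure_pmf Pm \<bind> Q) A" by simp
qed

lemma nn_integral_finite_mixture:
  fixes \<mu> :: "'b measure" and Q :: "nat \<Rightarrow> 'b measure" and Pm :: "nat pmf" and Bm :: "'b measure"
  assumes sP: "set_pmf Pm = {..n}"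
    and Qp: "\<And>k. prob_space (Q k)" and Qs: "\<And>k. sets (Q k) = sets Bm"
    and s\<mu>: "sets \<mu> = sets Bm" and fin: "finite_measure \<mu>"
    and eq: "\<And>A. A \<in> sets Bm \<Longrightarrow> measure \<mu> A = (\<Sum>k\<le>n. pmf Pm k * measure (Q k) A)"
    and g: "g \<in> borel_measurable Bm"
  shows "(\<integral>\<^sup>+x. g x \<partial>\<mu>) = (\<Sum>k\<le>n. (\<integral>\<^sup>+x. g x \<partial>Q k) * ennreal (pmf Pm k))"
proof -
  have Qm: "Q \<in> measurable (measure_pmf Pm) (subprob_algebra Bm)"
    using Qp Qs by (simp add: space_subprob_algebra prob_space_imp_subprob_space)
  have "\<mu> = measure_pmf Pm \<bind> Q" by (rule finite_mixture_eq_bind[OF assms(1-6)])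
  then have "(\<integral>\<^sup>+x. g x \<partial>\<mu>) = (\<integral>\<^sup>+k. (\<integral>\<^sup>+x. g x \<partial>Q k) \<partial>measure_pmf Pm)"
    by (simp add: nn_integral_bind[OF g Qm])
  also have "\<dots> = (\<Sum>k\<in>set_pmf Pm. (\<integral>\<^sup>+x. g x \<partial>Q k) * pmf Pm k)"
    by (rule nn_integral_measure_pmf_finite) (auto simp: sP)
  finally show ?thesis unfolding sP .
qed

lemma enn2real_sum_weighted:
  fixes a :: "nat \<Rightarrow> ennreal" and w :: "nat \<Rightarrow> real"
  assumes "\<And>k. k \<le> n \<Longrightarrow> a k < top" "\<And>k. 0 \<le> w k"
  shows "enn2real (\<Sum>k\<le>n. a k * ennreal (w k)) = (\<Sum>k\<le>n. w k * enn2real (a k))"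
proof -
  have "enn2real (\<Sum>k\<le>n. a k * ennreal (w k)) = (\<Sum>k\<le>n. enn2real (a k * ennreal (w k)))"
    using assms by (subst enn2real_sum) (auto simp: ennreal_mult_less_top)
  also have "\<dots> = (\<Sum>k\<le>n. w k * enn2real (a k))"
    using assms by (intro sum.cong) (auto simp: enn2real_mult)
  finally show ?thesis .
qed

lemma finite_mixture_integral:
  fixes \<mu> :: "'b measure" and Q :: "nat \<Rightarrow> 'b measure" and Pm :: "nat pmf" and Bm :: "'b measure"
    and h :: "'b \<Rightarrow> real"
  assumes sP: "set_pmf Pm = {..n}"
    and Qp: "\<And>k. prob_space (Q k)" and Qs: "\<And>k. sets (Q k) = sets Bm"
    and s\<mu>: "sets \<mu> = sets Bm" and fin: "finite_measure \<mu>"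
    and eq: "\<And>A. A \<in> sets Bm \<Longrightarrow> measure \<mu> A = (\<Sum>k\<le>n. pmf Pm k * measure (Q k) A)"
    and h: "h \<in> borel_measurable Bm" and hi: "\<And>k. k \<le> n \<Longrightarrow> integrable (Q k) h"
  shows "integrable \<mu> h" "integral\<^sup>L \<mu> h = (\<Sum>k\<le>n. pmf Pm k * integral\<^sup>L (Q k) h)"
proof -
  note mix = nn_integral_finite_mixture[OF sP Qp Qs s\<mu> fin eq]
  have m1: "(\<lambda>x. ennreal (norm (h x))) \<in> borel_measurable Bm"
    by (rule measurable_compose[OF measurable_compose[OF h borel_measurable_norm] measurable_ennreal])
  have m2: "(\<lambda>x. ennreal (h x)) \<in> borel_measurable Bm"
    by (rule measurable_compose[OF h measurable_ennreal])
  have m3: "(\<lambda>x. ennreal (- h x)) \<in> borel_measurable Bm"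
    by (rule measurable_compose[OF borel_measurable_uminus[OF h] measurable_ennreal])
  have hm: "h \<in> borel_measurable \<mu>" by (subst measurable_cong_sets[OF s\<mu> refl]) (rule h)
  have fQ: "(\<integral>\<^sup>+x. ennreal (norm (h x)) \<partial>Q k) < top" if "k \<le> n" for k
    using hi[OF that] unfolding integrable_iff_bounded by simp
  have "(\<integral>\<^sup>+x. ennreal (norm (h x)) \<partial>\<mu>) = (\<Sum>k\<le>n. (\<integral>\<^sup>+x. ennreal (norm (h x)) \<partial>Q k) * ennreal (pmf Pm k))"
    by (rule mix) (use m1 m2 m3 in auto)
  also have "\<dots> < top" using fQ by (simp add: ennreal_mult_less_top)
  finally show hint: "integrable \<mu> h" unfolding integrable_iff_bounded using hm by simp
  have pos: "(\<integral>\<^sup>+x. ennreal (h x) \<partial>\<mu>) = (\<Sum>k\<le>n. (\<integral>\<^sup>+x. ennreal (h x) \<partial>Q k) * ennreal (pmf Pm k))"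
    by (rule mix) (use m1 m2 m3 in auto)
  have neg: "(\<integral>\<^sup>+x. ennreal (- h x) \<partial>\<mu>) = (\<Sum>k\<le>n. (\<integral>\<^sup>+x. ennreal (- h x) \<partial>Q k) * ennreal (pmf Pm k))"
    by (rule mix) (use m1 m2 m3 in auto)
  have fp: "(\<integral>\<^sup>+x. ennreal (h x) \<partial>Q k) < top" if "k \<le> n" for k
  proof -
    have "(\<integral>\<^sup>+x. ennreal (h x) \<partial>Q k) \<le> (\<integral>\<^sup>+x. ennreal (norm (h x)) \<partial>Q k)"
      by (intro nn_integral_mono) (simp add: ennreal_leI)
    then show ?thesis using fQ[OF that] by (simp add: le_less_trans)
  qed
  have fn: "(\<integral>\<^sup>+x. ennreal (- h x) \<partial>Q k) < top" if "k \<le> n" for k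
  proof -
    have "(\<integral>\<^sup>+x. ennreal (- h x) \<partial>Q k) \<le> (\<integral>\<^sup>+x. ennreal (norm (h x)) \<partial>Q k)"
      by (intro nn_integral_mono) (simp add: ennreal_leI)
    then show ?thesis using fQ[OF that] by (simp add: le_less_trans)
  qed
  have P: "enn2real (\<integral>\<^sup>+x. ennreal (h x) \<partial>\<mu>) = (\<Sum>k\<le>n. pmf Pm k * enn2real (\<integral>\<^sup>+x. ennreal (h x) \<partial>Q k))"
    unfolding pos by (rule enn2real_sum_weighted[OF fp pmf_nonneg])
  have Nn: "enn2real (\<integral>\<^sup>+x. ennreal (- h x) \<partial>\<mu>) = (\<Sum>k\<le>n. pmf Pm k * enn2real (\<integral>\<^sup>+x. ennreal (- h x) \<partial>Q k))"
    unfolding neg by (rule enn2real_sum_weighted[OF fn pmf_nonneg])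
  have "integral\<^sup>L \<mu> h = enn2real (\<integral>\<^sup>+x. ennreal (h x) \<partial>\<mu>) - enn2real (\<integral>\<^sup>+x. ennreal (- h x) \<partial>\<mu>)"
    by (rule real_lebesgue_integral_def[OF hint])
  also have "\<dots> = (\<Sum>k\<le>n. pmf Pm k * (enn2real (\<integral>\<^sup>+x. ennreal (h x) \<partial>Q k) - enn2real (\<integral>\<^sup>+x. ennreal (- h x) \<partial>Q k)))"
    unfolding P Nn by (simp add: sum_subtractf algebra_simps)
  also have "\<dots> = (\<Sum>k\<le>n. pmf Pm k * integral\<^sup>L (Q k) h)"
    by (rule sum.cong[OF refl]) (simp add: real_lebesgue_integral_def[OF hi])
  finally show "integral\<^sup>L \<mu> h = (\<Sum>k\<le>n. pmf Pm k * integral\<^sup>L (Q k) h)" .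
qed


lemma distr_pair_snd:
  assumes P0: "prob_space P0" and P1: "prob_space P1"
  shows "distr (P0 \<Otimes>\<^sub>M P1) P1 snd = P1"
proof -
  interpret pair_prob_space P0 P1
    by (simp add: P0 P1 pair_prob_space_def pair_sigma_finite_def prob_space_imp_sigma_finite)
  show ?thesis
  proof (intro measure_eqI)
    fix A assume A: "A \<in> sets (distr (P0 \<Otimes>\<^sub>M P1) P1 snd)"
    then have A': "A \<in> sets P1" by simp
    have "emeasure (distr (P0 \<Otimes>\<^sub>M P1) P1 snd) A = emeasure (P0 \<Otimes>\<^sub>M P1) (space P0 \<times> A)"
      using A' by (auto simp add: emeasure_distr space_pair_measure dest: sets.sets_into_space intro!: arg_cong2[where f=emeasure])
    also have "\<dots> = emeasure P0 (space P0) * emeasure P1 A"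
      using A' by (intro M2.emeasure_pair_measure_Times) auto
    finally show "emeasure (distr (P0 \<Otimes>\<^sub>M P1) P1 snd) A = emeasure P1 A"
      using M1.emeasure_space_1 by simp
  qed simp
qed

lemma pair_measure_fst_integral:
  fixes g :: "'a \<Rightarrow> real"
  assumes P0: "prob_space P0" and P1: "prob_space P1" and g: "g \<in> borel_measurable P0"
  shows "integrable (P0 \<Otimes>\<^sub>M P1) (\<lambda>z. g (fst z)) \<longleftrightarrow> integrable P0 g"
    "integral\<^sup>L (P0 \<Otimes>\<^sub>M P1) (\<lambda>z. g (fst z)) = integral\<^sup>L P0 g"
proof -
  have d: "distr (P0 \<Otimes>\<^sub>M P1) P0 fst = P0" by (rule prob_space.distr_pair_fst[OF P1])
  have m: "fst \<in> (P0 \<Otimes>\<^sub>M P1) \<rightarrow>\<^sub>M P0" by simp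
  show "integrable (P0 \<Otimes>\<^sub>M P1) (\<lambda>z. g (fst z)) \<longleftrightarrow> integrable P0 g"
    using integrable_distr_eq[OF m g] d by simp
  show "integral\<^sup>L (P0 \<Otimes>\<^sub>M P1) (\<lambda>z. g (fst z)) = integral\<^sup>L P0 g"
    using integral_distr[OF m g] d by simp
qed

lemma pair_measure_snd_integral:
  fixes g :: "'b \<Rightarrow> real"
  assumes P0: "prob_space P0" and P1: "prob_space P1" and g: "g \<in> borel_measurable P1"
  shows "integrable (P0 \<Otimes>\<^sub>M P1) (\<lambda>z. g (snd z)) \<longleftrightarrow> integrable P1 g"
    "integral\<^sup>L (P0 \<Otimes>\<^sub>M P1) (\<lambda>z. g (snd z)) = integral\<^sup>L P1 g"
proof -
  have d: "distr (P0 \<Otimes>\<^sub>M P1) P1 snd = P1" by (rule distr_pair_snd[OF P0 P1])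
  have m: "snd \<in> (P0 \<Otimes>\<^sub>M P1) \<rightarrow>\<^sub>M P1" by simp
  show "integrable (P0 \<Otimes>\<^sub>M P1) (\<lambda>z. g (snd z)) \<longleftrightarrow> integrable P1 g"
    using integrable_distr_eq[OF m g] d by simp
  show "integral\<^sup>L (P0 \<Otimes>\<^sub>M P1) (\<lambda>z. g (snd z)) = integral\<^sup>L P1 g"
    using integral_distr[OF m g] d by simp
qed

lemma pair_measure_product_integral:
  fixes f :: "'a \<Rightarrow> real" and g :: "'b \<Rightarrow> real"
  assumes P0: "prob_space P0" and P1: "prob_space P1"
    and f: "integrable P0 f" and g: "integrable P1 g"
  shows "integrable (P0 \<Otimes>\<^sub>M P1) (\<lambda>z. f (fst z) * g (snd z))"
    "integral\<^sup>L (P0 \<Otimes>\<^sub>M P1) (\<lambda>z. f (fst z) * g (snd z)) = integral\<^sup>L P0 f * integral\<^sup>L P1 g"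
proof -
  interpret pair_prob_space P0 P1
    by (simp add: P0 P1 pair_prob_space_def pair_sigma_finite_def prob_space_imp_sigma_finite)
  have fm[measurable]: "f \<in> borel_measurable P0" using f by auto
  have gm[measurable]: "g \<in> borel_measurable P1" using g by auto
  show int: "integrable (P0 \<Otimes>\<^sub>M P1) (\<lambda>z. f (fst z) * g (snd z))"
  proof (rule Fubini_integrable)
    show "(\<lambda>z. f (fst z) * g (snd z)) \<in> borel_measurable (P0 \<Otimes>\<^sub>M P1)" by measurable
    have "integrable P0 (\<lambda>x. \<bar>f x\<bar> * (\<integral>y. \<bar>g y\<bar> \<partial>P1))"
      using f by (intro integrable_mult_left integrable_abs)
    then show "integrable P0 (\<lambda>x. \<integral>y. norm (f (fst (x, y)) * g (snd (x, y))) \<partial>P1)"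
      by (simp add: abs_mult)
    show "AE x in P0. integrable P1 (\<lambda>y. f (fst (x, y)) * g (snd (x, y)))"
      using g by (intro AE_I2) simp
  qed
  have "(\<integral>x. (\<integral>y. f x * g y \<partial>P1) \<partial>P0) = integral\<^sup>L (P0 \<Otimes>\<^sub>M P1) (\<lambda>(x, y). f x * g y)"
    by (rule integral_fst) (use int in \<open>simp add: case_prod_beta'\<close>)
  moreover have "(\<integral>x. (\<integral>y. f x * g y \<partial>P1) \<partial>P0) = integral\<^sup>L P0 f * integral\<^sup>L P1 g"
    by simp
  moreover have "(\<lambda>(x, y). f x * g y) = (\<lambda>z. f (fst z) * g (snd z))" by auto
  ultimately show "integral\<^sup>L (P0 \<Otimes>\<^sub>M P1) (\<lambda>z. f (fst z) * g (snd z)) = integral\<^sup>L P0 f * integral\<^sup>L P1 g"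
    by simp
qed



lemma independent_sum_moments:
  fixes P0 P1 :: "(real \<times> real) measure" and e :: real
  assumes P0: "prob_space P0" and P1: "prob_space P1"
    and s0: "sets P0 = sets borel" and s1: "sets P1 = sets borel"
    and i0: "integrable P0 (\<lambda>x. (fst x)\<^sup>2)" and i1: "integrable P1 (\<lambda>x. (fst x)\<^sup>2)"
  defines "S \<equiv> \<lambda>z. fst (fst z) + fst (snd z) + e"
  shows "integrable (P0 \<Otimes>\<^sub>M P1) S" "integrable (P0 \<Otimes>\<^sub>M P1) (\<lambda>z. (S z)\<^sup>2)"
    "integral\<^sup>L (P0 \<Otimes>\<^sub>M P1) S = integral\<^sup>L P0 fst + integral\<^sup>L P1 fst + e"
    "integral\<^sup>L (P0 \<Otimes>\<^sub>M P1) (\<lambda>z. (S z)\<^sup>2) = integral\<^sup>L P0 (\<lambda>x. (fst x)\<^sup>2) + integral\<^sup>L P1 (\<lambda>x. (fst x)\<^sup>2)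
       + e\<^sup>2 + 2 * (integral\<^sup>L P0 fst * integral\<^sup>L P1 fst) + 2 * e * (integral\<^sup>L P0 fst + integral\<^sup>L P1 fst)"
proof -
  interpret pp: pair_prob_space P0 P1
    by (simp add: P0 P1 pair_prob_space_def pair_sigma_finite_def prob_space_imp_sigma_finite)
  have fm: "fst \<in> borel_measurable P0" "fst \<in> borel_measurable P1"
    "(\<lambda>x. (fst x)\<^sup>2) \<in> borel_measurable P0" "(\<lambda>x. (fst x)\<^sup>2) \<in> borel_measurable P1"
    unfolding measurable_cong_sets[OF s0 refl] measurable_cong_sets[OF s1 refl]
    by (intro borel_measurable_continuous_onI continuous_intros)+
  have if0: "integrable P0 fst" and if1: "integrable P1 fst"
    using pp.M1.square_integrable_imp_integrable[OF fm(1) i0]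
      pp.M2.square_integrable_imp_integrable[OF fm(2) i1] .
  note a0 = pair_measure_fst_integral[OF P0 P1 fm(1)] and a1 = pair_measure_snd_integral[OF P0 P1 fm(2)]
  note b0 = pair_measure_fst_integral[OF P0 P1 fm(3)] and b1 = pair_measure_snd_integral[OF P0 P1 fm(4)]
  note cr = pair_measure_product_integral[OF P0 P1 if0 if1]
  note ia = a0(1)[THEN iffD2, OF if0] a1(1)[THEN iffD2, OF if1]
    b0(1)[THEN iffD2, OF i0] b1(1)[THEN iffD2, OF i1] cr(1)
  have sq: "(\<lambda>z. (S z)\<^sup>2) = (\<lambda>z. (fst (fst z))\<^sup>2 + (fst (snd z))\<^sup>2 + e\<^sup>2
      + 2 * (fst (fst z) * fst (snd z)) + 2 * e * fst (fst z) + 2 * e * fst (snd z))"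
    unfolding S_def by (simp add: power2_eq_square algebra_simps)
  have ie: "integrable (P0 \<Otimes>\<^sub>M P1) (\<lambda>z. c)" for c :: real by simp
  show "integrable (P0 \<Otimes>\<^sub>M P1) S" unfolding S_def
    by (intro Bochner_Integration.integrable_add ia ie)
  show "integrable (P0 \<Otimes>\<^sub>M P1) (\<lambda>z. (S z)\<^sup>2)" unfolding sq
    by (intro Bochner_Integration.integrable_add integrable_mult_right ia ie)
  show "integral\<^sup>L (P0 \<Otimes>\<^sub>M P1) S = integral\<^sup>L P0 fst + integral\<^sup>L P1 fst + e"
    unfolding S_def using ia a0(2) a1(2) by (simp add: pp.prob_space)
  have "integral\<^sup>L (P0 \<Otimes>\<^sub>M P1) (\<lambda>z. (S z)\<^sup>2) = integral\<^sup>L P0 (\<lambda>x. (fst x)\<^sup>2) + integral\<^sup>L P1 (\<lambda>x. (fst x)\<^sup>2)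
      + e\<^sup>2 + 2 * integral\<^sup>L (P0 \<Otimes>\<^sub>M P1) (\<lambda>z. fst (fst z) * fst (snd z))
      + 2 * e * integral\<^sup>L P0 fst + 2 * e * integral\<^sup>L P1 fst"
    unfolding sq using ia a0(2) a1(2) b0(2) b1(2) by (simp add: pp.prob_space)
  then show "integral\<^sup>L (P0 \<Otimes>\<^sub>M P1) (\<lambda>z. (S z)\<^sup>2) = integral\<^sup>L P0 (\<lambda>x. (fst x)\<^sup>2)
       + integral\<^sup>L P1 (\<lambda>x. (fst x)\<^sup>2) + e\<^sup>2 + 2 * (integral\<^sup>L P0 fst * integral\<^sup>L P1 fst)
       + 2 * e * (integral\<^sup>L P0 fst + integral\<^sup>L P1 fst)"
    unfolding cr(2) by (simp add: algebra_simps)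
qed

lemma shifted_sum_law_moments:
  fixes P0 P1 :: "(real \<times> real) measure" and e e' :: real
  assumes P0: "prob_space P0" and P1: "prob_space P1"
    and s0: "sets P0 = sets borel" and s1: "sets P1 = sets borel"
    and i0: "integrable P0 (\<lambda>x. (fst x)\<^sup>2)" and i1: "integrable P1 (\<lambda>x. (fst x)\<^sup>2)"
  defines "Q \<equiv> distr (P0 \<Otimes>\<^sub>M P1) borel (\<lambda>((a, b), (c, d)). (a + c + e, b + d + e'))"
  shows "prob_space Q" "sets Q = sets borel" "integrable Q fst" "integrable Q (\<lambda>x. (fst x)\<^sup>2)"
    "integral\<^sup>L Q fst = integral\<^sup>L P0 fst + integral\<^sup>L P1 fst + e"
    "integral\<^sup>L Q (\<lambda>x. (fst x)\<^sup>2) = integral\<^sup>L P0 (\<lambda>x. (fst x)\<^sup>2) + integral\<^sup>L P1 (\<lambda>x. (fst x)\<^sup>2) + e\<^sup>2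
       + 2 * (integral\<^sup>L P0 fst * integral\<^sup>L P1 fst) + 2 * e * (integral\<^sup>L P0 fst + integral\<^sup>L P1 fst)"
proof -
  interpret pp: pair_prob_space P0 P1
    by (simp add: P0 P1 pair_prob_space_def pair_sigma_finite_def prob_space_imp_sigma_finite)
  define G :: "(real \<times> real) \<times> (real \<times> real) \<Rightarrow> real \<times> real" where
    "G = (\<lambda>((a, b), (c, d)). (a + c + e, b + d + e'))"
  have G: "G = (\<lambda>z. (fst (fst z) + fst (snd z) + e, snd (fst z) + snd (snd z) + e'))"
    by (auto simp: G_def split: prod.split)
  have "G \<in> borel_measurable borel" unfolding G
    by (intro borel_measurable_continuous_onI continuous_intros)
  then have Gm: "G \<in> (P0 \<Otimes>\<^sub>M P1) \<rightarrow>\<^sub>M borel"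
    unfolding measurable_cong_sets[OF sets_pair_measure_cong[OF s0 s1] refl] borel_prod .
  have hm: "fst \<in> borel_measurable (borel :: (real \<times> real) measure)"
    "(\<lambda>x. (fst x)\<^sup>2) \<in> borel_measurable (borel :: (real \<times> real) measure)"
    by (intro borel_measurable_continuous_onI continuous_intros)+
  note S = independent_sum_moments[OF P0 P1 s0 s1 i0 i1, of e]
  have fstG: "fst (G z) = fst (fst z) + fst (snd z) + e" for z unfolding G by simp
  show "prob_space Q" unfolding Q_def G_def[symmetric] by (rule pp.prob_space_distr[OF Gm])
  show "sets Q = sets borel" unfolding Q_def by simp
  show "integrable Q fst" "integrable Q (\<lambda>x. (fst x)\<^sup>2)"
    unfolding Q_def G_def[symmetric] using integrable_distr_eq[OF Gm hm(1)] integrable_distr_eq[OF Gm hm(2)] S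
    by (simp_all add: fstG)
  show "integral\<^sup>L Q fst = integral\<^sup>L P0 fst + integral\<^sup>L P1 fst + e"
    unfolding Q_def G_def[symmetric] integral_distr[OF Gm hm(1)] fstG using S by simp
  show "integral\<^sup>L Q (\<lambda>x. (fst x)\<^sup>2) = integral\<^sup>L P0 (\<lambda>x. (fst x)\<^sup>2) + integral\<^sup>L P1 (\<lambda>x. (fst x)\<^sup>2) + e\<^sup>2
       + 2 * (integral\<^sup>L P0 fst * integral\<^sup>L P1 fst) + 2 * e * (integral\<^sup>L P0 fst + integral\<^sup>L P1 fst)"
    unfolding Q_def G_def[symmetric] integral_distr[OF Gm hm(2)] using S by (simp add: fstG)
qed

section \<open>The recursive random variables\<close>

locale split_process = two_state_chain p for p :: "nat \<Rightarrow> nat \<Rightarrow> real" +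
  fixes M :: "'a measure" and X Z :: "nat \<Rightarrow> nat \<Rightarrow> 'a \<Rightarrow> real"
  assumes M: "prob_space M"
    and rvX: "\<And>i n. i \<in> {0,1} \<Longrightarrow> X i n \<in> borel_measurable M"
    and rvZ: "\<And>i n. i \<in> {0,1} \<Longrightarrow> Z i n \<in> borel_measurable M"
    and sqX: "\<And>i n. i \<in> {0,1} \<Longrightarrow> integrable M (\<lambda>\<omega>. (X i n \<omega>)\<^sup>2)"
    and init: "\<And>i n \<omega>. i \<in> {0,1} \<Longrightarrow> n \<le> 1 \<Longrightarrow> \<omega> \<in> space M \<Longrightarrow> X i n \<omega> = 0"
    and rec: "\<And>i n A. i \<in> {0,1} \<Longrightarrow> 2 \<le> n \<Longrightarrow> A \<in> sets (borel :: (real \<times> real) measure) \<Longrightarrow>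
               measure M {\<omega> \<in> space M. (X i n \<omega>, Z i n \<omega>) \<in> A} = rhs_law p M X Z i n A"
begin

sublocale prob_space M by (rule M)

lemma integrable_X: "j \<in> {0,1} \<Longrightarrow> integrable M (X j k)"
  by (rule square_integrable_imp_integrable[OF rvX sqX])

lemma pair_law_moments:
  assumes j: "j \<in> {0,1}"
  shows "prob_space (pair_law M X Z j k)" "sets (pair_law M X Z j k) = sets borel"
    "integrable (pair_law M X Z j k) (\<lambda>x. (fst x)\<^sup>2)"
    "integral\<^sup>L (pair_law M X Z j k) fst = expectation (X j k)"
    "integral\<^sup>L (pair_law M X Z j k) (\<lambda>x. (fst x)\<^sup>2) = expectation (\<lambda>\<omega>. (X j k \<omega>)\<^sup>2)"
proof -
  have XZ: "(\<lambda>\<omega>. (X j k \<omega>, Z j k \<omega>)) \<in> borel_measurable M"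
    using rvX[OF j] rvZ[OF j] by (rule borel_measurable_Pair)
  have hm: "fst \<in> borel_measurable (borel :: (real \<times> real) measure)"
    "(\<lambda>x. (fst x)\<^sup>2) \<in> borel_measurable (borel :: (real \<times> real) measure)"
    by (intro borel_measurable_continuous_onI continuous_intros)+
  show "prob_space (pair_law M X Z j k)"
    unfolding pair_law_def by (rule prob_space_distr[OF XZ])
  show "sets (pair_law M X Z j k) = sets borel" unfolding pair_law_def by simp
  show "integrable (pair_law M X Z j k) (\<lambda>x. (fst x)\<^sup>2)"
    unfolding pair_law_def using integrable_distr_eq[OF XZ hm(2)] sqX[OF j] by simp
  show "integral\<^sup>L (pair_law M X Z j k) fst = expectation (X j k)"
    "integral\<^sup>L (pair_law M X Z j k) (\<lambda>x. (fst x)\<^sup>2) = expectation (\<lambda>\<omega>. (X j k \<omega>)\<^sup>2)"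
    unfolding pair_law_def using integral_distr[OF XZ hm(1)] integral_distr[OF XZ hm(2)] by simp_all
qed

text \<open>The recursion says that the law of \<open>(X\<^sub>n\<^sup>i, Z\<^sub>n\<^sup>i)\<close> is the binomial mixture of the laws
  \<open>Q k\<close> of the shifted independent sums; first and second moments mix accordingly.\<close>

lemma moments_rec:
  assumes i: "i \<in> {0,1}" and n: "2 \<le> n"
  shows "expectation (X i n)
      = (\<Sum>k\<le>n. split_prob i n k * (expectation (X 0 k) + expectation (X 1 (n - k)) + eta1 p i n))"
    "expectation (\<lambda>\<omega>. (X i n \<omega>)\<^sup>2)
      = (\<Sum>k\<le>n. split_prob i n k * (expectation (\<lambda>\<omega>. (X 0 k \<omega>)\<^sup>2)
          + expectation (\<lambda>\<omega>. (X 1 (n - k) \<omega>)\<^sup>2) + (eta1 p i n)\<^sup>2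
          + 2 * (expectation (X 0 k) * expectation (X 1 (n - k)))
          + 2 * eta1 p i n * (expectation (X 0 k) + expectation (X 1 (n - k)))))"
proof -
  define P where "P j k = pair_law M X Z j k" for j k
  define Q where "Q k = distr (P 0 k \<Otimes>\<^sub>M P 1 (n - k)) borel
      (\<lambda>((a, b), (c, d)). (a + c + eta1 p i n, b + d + eta2 p i n))" for k
  have j01: "(0::nat) \<in> {0,1}" "(1::nat) \<in> {0,1}" by simp_all
  have QM: "prob_space (Q k)" "sets (Q k) = sets borel"
    "integrable (Q k) fst" "integrable (Q k) (\<lambda>x. (fst x)\<^sup>2)"
    "integral\<^sup>L (Q k) fst = expectation (X 0 k) + expectation (X 1 (n - k)) + eta1 p i n"
    "integral\<^sup>L (Q k) (\<lambda>x. (fst x)\<^sup>2) = expectation (\<lambda>\<omega>. (X 0 k \<omega>)\<^sup>2)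
          + expectation (\<lambda>\<omega>. (X 1 (n - k) \<omega>)\<^sup>2) + (eta1 p i n)\<^sup>2
          + 2 * (expectation (X 0 k) * expectation (X 1 (n - k)))
          + 2 * eta1 p i n * (expectation (X 0 k) + expectation (X 1 (n - k)))" for k
  proof -
    note P0 = pair_law_moments[OF j01(1), of k] and P1 = pair_law_moments[OF j01(2), of "n - k"]
    show "prob_space (Q k)" "sets (Q k) = sets borel"
      "integrable (Q k) fst" "integrable (Q k) (\<lambda>x. (fst x)\<^sup>2)"
      "integral\<^sup>L (Q k) fst = expectation (X 0 k) + expectation (X 1 (n - k)) + eta1 p i n"
      "integral\<^sup>L (Q k) (\<lambda>x. (fst x)\<^sup>2) = expectation (\<lambda>\<omega>. (X 0 k \<omega>)\<^sup>2)
          + expectation (\<lambda>\<omega>. (X 1 (n - k) \<omega>)\<^sup>2) + (eta1 p i n)\<^sup>2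
          + 2 * (expectation (X 0 k) * expectation (X 1 (n - k)))
          + 2 * eta1 p i n * (expectation (X 0 k) + expectation (X 1 (n - k)))"
      unfolding Q_def P_def
      using shifted_sum_law_moments[where e = "eta1 p i n" and e' = "eta2 p i n",
          OF P0(1) P1(1) P0(2) P1(2) P0(3) P1(3)]
      by (simp_all only: P0(4,5) P1(4,5))
  qed
  have law: "measure (P i n) A = (\<Sum>k\<le>n. pmf (binomial_pmf n (p i 0)) k * measure (Q k) A)"
    if A: "A \<in> sets borel" for A
  proof -
    have XZ: "(\<lambda>\<omega>. (X i n \<omega>, Z i n \<omega>)) \<in> borel_measurable M"
      using rvX[OF i] rvZ[OF i] by (rule borel_measurable_Pair)
    have "measure (P i n) A = measure M ((\<lambda>\<omega>. (X i n \<omega>, Z i n \<omega>)) -` A \<inter> space M)"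
      unfolding P_def pair_law_def using A by (intro measure_distr[OF XZ]) simp
    also have "(\<lambda>\<omega>. (X i n \<omega>, Z i n \<omega>)) -` A \<inter> space M = {\<omega> \<in> space M. (X i n \<omega>, Z i n \<omega>) \<in> A}"
      by auto
    also have "measure M \<dots> = rhs_law p M X Z i n A" by (rule rec[OF i n A])
    also have "\<dots> = (\<Sum>k\<le>n. pmf (binomial_pmf n (p i 0)) k * measure (Q k) A)"
      unfolding rhs_law_def Q_def P_def ..
    finally show ?thesis .
  qed
  note PM = pair_law_moments[OF i, of n, folded P_def]
  have sP: "set_pmf (binomial_pmf n (p i 0)) = {..n}" using p0_pos[OF i] p0_lt_1[OF i] by simp
  have hm: "fst \<in> borel_measurable (borel :: (real \<times> real) measure)"
    "(\<lambda>x. (fst x)\<^sup>2) \<in> borel_measurable (borel :: (real \<times> real) measure)"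
    by (intro borel_measurable_continuous_onI continuous_intros)+
  have mixture: "integral\<^sup>L (P i n) f = (\<Sum>k\<le>n. pmf (binomial_pmf n (p i 0)) k * integral\<^sup>L (Q k) f)"
    if "f \<in> borel_measurable borel" "\<And>k. integrable (Q k) f" for f
    by (rule finite_mixture_integral(2)[OF sP QM(1) QM(2) PM(2) prob_space.finite_measure[OF PM(1)]])
      (use law that in auto)
  show "expectation (X i n)
      = (\<Sum>k\<le>n. split_prob i n k * (expectation (X 0 k) + expectation (X 1 (n - k)) + eta1 p i n))"
    using mixture[OF hm(1) QM(3)] by (simp only: PM(4) QM(5) pmf_split_prob[OF i])
  show "expectation (\<lambda>\<omega>. (X i n \<omega>)\<^sup>2)
      = (\<Sum>k\<le>n. split_prob i n k * (expectation (\<lambda>\<omega>. (X 0 k \<omega>)\<^sup>2)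
          + expectation (\<lambda>\<omega>. (X 1 (n - k) \<omega>)\<^sup>2) + (eta1 p i n)\<^sup>2
          + 2 * (expectation (X 0 k) * expectation (X 1 (n - k)))
          + 2 * eta1 p i n * (expectation (X 0 k) + expectation (X 1 (n - k)))))"
    using mixture[OF hm(2) QM(4)] by (simp only: PM(5) QM(6) pmf_split_prob[OF i])
qed

lemma moments_small:
  assumes "j \<in> {0,1}" "k \<le> 1"
  shows "expectation (X j k) = 0" "variance (X j k) = 0"
proof -
  have "expectation (X j k) = expectation (\<lambda>_. 0)"
    by (rule Bochner_Integration.integral_cong) (use init[OF assms] in auto)
  then show "expectation (X j k) = 0" by simp
  then have "variance (X j k) = expectation (\<lambda>_. 0)"
    by (intro Bochner_Integration.integral_cong) (use init[OF assms] in simp_all)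
  then show "variance (X j k) = 0" by simp
qed

lemma expectation_X: "j \<in> {0,1} \<Longrightarrow> expectation (X j n) = mean_sol j n"
  by (rule mean_sol_unique[OF moments_small(1) moments_rec(1)])

lemma variance_X_rec:
  assumes i: "i \<in> {0,1}" and n: "2 \<le> n"
  shows "variance (X i n) - (\<Sum>k\<le>n. split_prob i n k * (variance (X 0 k) + variance (X 1 (n - k))))
       = split_var i n"
proof -
  have "variance (X j k) = expectation (\<lambda>\<omega>. (X j k \<omega>)\<^sup>2) - (mean_sol j k)^2" if "j \<in> {0,1}" for j k
    using variance_eq[OF integrable_X[OF that] sqX[OF that]] expectation_X[OF that] by simp
  then show ?thesis
    using centered_moment_rec[OF i n, where s = "\<lambda>j k. expectation (\<lambda>\<omega>. (X j k \<omega>)\<^sup>2)"]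
      moments_rec(2)[OF i n] i by (simp add: expectation_X)
qed

lemma variance_X_asymp:
  "\<exists>A. \<forall>j\<in>{0,1}. \<forall>n. \<bar>variance (X j n) - sigma2 p * real n * ln (real n)\<bar> \<le> A * real n"
  by (rule centered_moment_asymp[OF moments_small(2) variance_X_rec])

end

theorem lemma6p4:
  fixes p :: "nat \<Rightarrow> nat \<Rightarrow> real"
    and M :: "'a measure"
    and X Z :: "nat \<Rightarrow> nat \<Rightarrow> 'a \<Rightarrow> real"
  assumes stoch: "\<And>i. i \<in> {0,1} \<Longrightarrow> p i 0 + p i 1 = 1"
    and pos: "\<And>i j. i \<in> {0,1} \<Longrightarrow> j \<in> {0,1} \<Longrightarrow> 0 < p i j \<and> p i j < 1"
    and nonhalf: "\<exists>i\<in>{0,1}. \<exists>j\<in>{0,1}. p i j \<noteq> 1/2"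
    and M: "prob_space M"
    and rvX: "\<And>i n. i \<in> {0,1} \<Longrightarrow> X i n \<in> borel_measurable M"
    and rvZ: "\<And>i n. i \<in> {0,1} \<Longrightarrow> Z i n \<in> borel_measurable M"
    and sqX: "\<And>i n. i \<in> {0,1} \<Longrightarrow> integrable M (\<lambda>\<omega>. (X i n \<omega>)\<^sup>2)"
    and sqZ: "\<And>i n. i \<in> {0,1} \<Longrightarrow> integrable M (\<lambda>\<omega>. (Z i n \<omega>)\<^sup>2)"
    and init: "\<And>i n \<omega>. i \<in> {0,1} \<Longrightarrow> n \<le> 1 \<Longrightarrow> \<omega> \<in> space M \<Longrightarrow> X i n \<omega> = 0 \<and> Z i n \<omega> = 0"
    and rec: "\<And>i n A. i \<in> {0,1} \<Longrightarrow> n \<ge> 2 \<Longrightarrow> A \<in> sets (borel :: (real \<times> real) measure) \<Longrightarrow>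
               measure M {\<omega> \<in> space M. (X i n \<omega>, Z i n \<omega>) \<in> A} = rhs_law p M X Z i n A"
  shows "\<forall>i\<in>{0,1}. (\<lambda>n. prob_space.variance M (X i n) - sigma2 p * real n * ln (real n))
                    \<in> O(\<lambda>n. real n)"
proof -
  interpret split_process p M X Z
  proof (rule split_process.intro)
    show "two_state_chain p" by (rule two_state_chain.intro) (fact stoch pos)+
    show "split_process_axioms p M X Z"
      by (rule split_process_axioms.intro) (fact M rvX rvZ sqX rec | use init in blast)+
  qed
  obtain A where A: "\<And>j n. j \<in> {0,1} \<Longrightarrow> \<bar>variance (X j n) - sigma2 p * real n * ln (real n)\<bar> \<le> A * real n"
    using variance_X_asymp by blast
  show ?thesis
  proof
    fix i :: nat assume "i \<in> {0,1}"
    then show "(\<lambda>n. variance (X i n) - sigma2 p * real n * ln (real n)) \<in> O(\<lambda>n. real n)"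
      using A by (intro bigoI[where c = A] always_eventually) simp
  qed
qed

end
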